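(* Let $n\ge1$, $0\le s\le n$, and let $\mathfrak{g}$ be of type $B_n$. Then \[ \widetilde{\operatorname{ps}}(\omega_n+\widetilde\omega_s)=\frac{\operatorname{Cat}_{(2n+1-s,s)}(q)}{q^{n+1-s}+1}\prod_{k=1}^{n+1}(q^k+1). \]
   Context: For type $B_n$: $\omega_i=\epsilon_1+\cdots+\epsilon_i$ ($i<n$), $\omega_n=\tfrac12(\epsilon_1+\cdots+\epsilon_n)$, $\widetilde\omega_0=0$, $\widetilde\omega_i=\omega_i$ ($1\le i<n$), $\widetilde\omega_n=2\omega_n$. The character $\operatorname{ch}V(\lambda)=\sum_\mu\dim V(\lambda)_\mu x_1^{\mu_1}\cdots x_n^{\mu_n}$; the principal specialization $\operatorname{ps}(\lambda)$ is obtained by substituting $x_i=q^i$ (giving a Laurent polynomial in $q^{1/2}$), and $\widetilde{\operatorname{ps}}(\lambda)=q^{-\eta}\operatorname{ps}(\lambda)$ where $\eta$ is the lowest exponent of $q$ occurring in $\operatorname{ps}(\lambda)$. The $q$-Catalan triangle number is $\operatorname{Cat}_{(a,k)}(q)=\frac{[a+k]_q!\,[a-k+1]_q}{[k]_q!\,[a+1]_q!}$, with $[j]_q=1+q+\cdots+q^{j-1}$ and $[j]_q!=[1]_q\cdots[j]_q$. *)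

theory Defs
  imports Complex_Main "HOL-Combinatorics.Permutations"
begin

text \<open>Weights are encoded in DOUBLED epsilon-coordinates:
  a weight mu = sum_i mu_i eps_i (mu_i in (1/2)Z) is represented by the
  function d :: nat => int with d i = 2 mu_i for 1 <= i <= n and d i = 0
  otherwise.\<close>

definition wvec :: "nat \<Rightarrow> (nat \<Rightarrow> int) set" where
  "wvec n = {v. \<forall>i. i \<notin> {1..n} \<longrightarrow> v i = 0}"

definition eps2 :: "nat \<Rightarrow> nat \<Rightarrow> int" where
  "eps2 i = (\<lambda>j. if j = i then 2 else 0)"

definition posroots :: "nat \<Rightarrow> (nat \<Rightarrow> int) set" where
  "posroots n =
     {(\<lambda>k. eps2 i k - eps2 j k) | i j. 1 \<le> i \<and> i < j \<and> j \<le> n}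
   \<union> {(\<lambda>k. eps2 i k + eps2 j k) | i j. 1 \<le> i \<and> i < j \<and> j \<le> n}
   \<union> {eps2 i | i. 1 \<le> i \<and> i \<le> n}"

text \<open>Half-sum of positive roots rho = sum_i (n - i + 1/2) eps_i (doubled).\<close>
definition rho2 :: "nat \<Rightarrow> nat \<Rightarrow> int" where
  "rho2 n i = (if 1 \<le> i \<and> i \<le> n then 2 * (int n - int i) + 1 else 0)"

definition kostant :: "nat \<Rightarrow> (nat \<Rightarrow> int) \<Rightarrow> nat" where
  "kostant n nu = card {c :: (nat \<Rightarrow> int) \<Rightarrow> nat.
      (\<forall>a. a \<notin> posroots n \<longrightarrow> c a = 0) \<and>
      (\<lambda>k. \<Sum>a\<in>posroots n. int (c a) * a k) = nu}"

text \<open>Weyl group of B_n = signed permutations: (sigma, F) acts by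
  v |-> (i |-> (if i in F then -1 else 1) * v (sigma i)); its sign
  (determinant) is sign sigma * (-1)^card F.\<close>
definition weylB :: "nat \<Rightarrow> ((nat \<Rightarrow> nat) \<times> nat set) set" where
  "weylB n = {(\<sigma>, F). \<sigma> permutes {1..n} \<and> F \<subseteq> {1..n}}"

definition wact :: "(nat \<Rightarrow> nat) \<times> nat set \<Rightarrow> (nat \<Rightarrow> int) \<Rightarrow> nat \<Rightarrow> int" where
  "wact w v = (\<lambda>i. (if i \<in> snd w then -1 else 1) * v (fst w i))"

definition wsgn :: "(nat \<Rightarrow> nat) \<times> nat set \<Rightarrow> int" where
  "wsgn w = sign (fst w) * (-1) ^ card (snd w)"

text \<open>Weight multiplicity dim V(lambda)_mu (Kostant's multiplicity formula).\<close>
definition wmult :: "nat \<Rightarrow> (nat \<Rightarrow> int) \<Rightarrow> (nat \<Rightarrow> int) \<Rightarrow> int" where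
  "wmult n lam mu = (\<Sum>w\<in>weylB n. wsgn w *
      int (kostant n (\<lambda>k. wact w (\<lambda>i. lam i + rho2 n i) k - (mu k + rho2 n k))))"

text \<open>Principal specialization x_i = q^i: ps(lambda) = sum_e psc e q^(e/2),
  where psc e collects the multiplicities of all weights mu with
  sum_i i*(2 mu_i) = e.\<close>
definition psc :: "nat \<Rightarrow> (nat \<Rightarrow> int) \<Rightarrow> int \<Rightarrow> int" where
  "psc n lam e = (\<Sum>mu\<in>{mu \<in> wvec n. wmult n lam mu \<noteq> 0 \<and>
                        (\<Sum>i=1..n. int i * mu i) = e}. wmult n lam mu)"

text \<open>Twice the lowest exponent eta of q occurring in ps(lambda).\<close>
definition eta2 :: "nat \<Rightarrow> (nat \<Rightarrow> int) \<Rightarrow> int" where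
  "eta2 n lam = Min {e. psc n lam e \<noteq> 0}"

text \<open>Normalized principal specialization q^(-eta) ps(lambda), evaluated at q > 0.\<close>
definition tps :: "nat \<Rightarrow> (nat \<Rightarrow> int) \<Rightarrow> real \<Rightarrow> real" where
  "tps n lam q = (\<Sum>e\<in>{e. psc n lam e \<noteq> 0}.
       of_int (psc n lam e) * q powr (of_int (e - eta2 n lam) / 2))"

definition omega2 :: "nat \<Rightarrow> nat \<Rightarrow> nat \<Rightarrow> int" where
  "omega2 n i = (\<lambda>j. if 1 \<le> j \<and> j \<le> n then
                      (if i < n then (if j \<le> i then 2 else 0) else 1) else 0)"

definition omegat2 :: "nat \<Rightarrow> nat \<Rightarrow> nat \<Rightarrow> int" where
  "omegat2 n s = (if s = 0 then (\<lambda>_. 0) else if s < n then omega2 n s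
                  else (\<lambda>j. 2 * omega2 n n j))"

definition qint :: "nat \<Rightarrow> real \<Rightarrow> real" where
  "qint j q = (\<Sum>i<j. q ^ i)"

definition qfact :: "nat \<Rightarrow> real \<Rightarrow> real" where
  "qfact j q = (\<Prod>i=1..j. qint i q)"

definition qcat :: "nat \<Rightarrow> nat \<Rightarrow> real \<Rightarrow> real" where
  "qcat a k q = qfact (a + k) q * qint (a - k + 1) q / (qfact k q * qfact (a + 1) q)"

end

(* By Kostant's multiplicity formula, multiplying the weight multiplicities of V(lambda)
   by the Weyl denominator prod_{a>0} (1 - e^(-a)) gives Weyl's alternating sum
   sum_w sgn(w) e^(w(lambda+rho)-rho).  For lambda = omega_n + omega~_s the same holds for
   K * prod_{a>0} (1 - e^(-a)), where K = prod_i (x_i^(1/2) + x_i^(-1/2)) * (e_s - e_(s-2)) and e_k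
   are the elementary symmetric functions of x_1^(+-1), ..., x_n^(+-1): at x_i = y_i^2 both sides are
   ratios of determinants det (x_i^m_j - x_i^(-m_j)), which are evaluated by expanding along a row as
   Chebyshev polynomials in x + 1/x.  Evaluating at y_i = T^(B^i) separates the weights, so the two
   series agree, and since both are supported in a half space, the multiplicities are the
   coefficients of K.  Under x_i = q^i, K becomes prod_k (1 + q^(k-n) X) up to a factor, whose
   coefficients are Gaussian polynomials by Gauss' q-binomial theorem; the result is the q-Catalan
   expression, with constant term 1, which identifies the lowest exponent eta. *)

theory Submission
  imports Defs "Jordan_Normal_Form.Determinant" "HOL-Computational_Algebra.Polynomial"
begin

section \<open>Polynomials and Laurent polynomials in one variable\<close>

lemma poly_eqI_infinite:
  fixes p q :: "'a::idom poly"
  assumes "infinite A" and "\<And>x. x \<in> A \<Longrightarrow> poly p x = poly q x"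
  shows "p = q"
proof (rule ccontr)
  assume "p \<noteq> q"
  hence "finite {x. poly (p - q) x = 0}" by (intro poly_roots_finite) simp
  moreover have "A \<subseteq> {x. poly (p - q) x = 0}" using assms(2) by auto
  ultimately show False using assms(1) finite_subset by blast
qed

lemma poly_eqI_gt1:
  fixes p q :: "real poly"
  assumes "\<And>t. t > 1 \<Longrightarrow> poly p t = poly q t"
  shows "p = q"
  by (rule poly_eqI_infinite[OF infinite_Ioi[of "1::real"]]) (use assms in auto)

lemma laurent_coeff_eq_0:
  fixes a :: "int \<Rightarrow> real"
  assumes fin: "finite E" and zero: "\<And>t. t > 1 \<Longrightarrow> (\<Sum>e\<in>E. a e * t powi e) = 0" and "e0 \<in> E"
  shows "a e0 = 0"
proof -
  define L where "L = (\<Sum>e\<in>E. \<bar>e\<bar>)"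
  have shift_nonneg: "e + L \<ge> 0" if "e \<in> E" for e
  proof -
    have "\<bar>e\<bar> \<le> L" unfolding L_def using fin that by (intro member_le_sum) auto
    thus ?thesis by linarith
  qed
  define p where "p = (\<Sum>e\<in>E. monom (a e) (nat (e + L)))"
  have "poly p t = 0" if "t > 1" for t :: real
  proof -
    have "poly p t = (\<Sum>e\<in>E. t powi L * (a e * t powi e))"
      unfolding p_def poly_sum poly_monom
    proof (rule sum.cong[OF refl])
      fix e assume "e \<in> E"
      hence "t ^ nat (e + L) = t powi (e + L)"
        using shift_nonneg by (simp add: power_int_def)
      also have "\<dots> = t powi e * t powi L" using that by (simp add: power_int_add)
      finally have "t ^ nat (e + L) = t powi e * t powi L" .
      thus "a e * t ^ nat (e + L) = t powi L * (a e * t powi e)" by simp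
    qed
    thus ?thesis using zero[OF that] by (simp add: sum_distrib_left[symmetric])
  qed
  hence "p = 0" using poly_eqI_gt1[of p 0] by simp
  have "coeff p (nat (e0 + L)) = (\<Sum>e\<in>E. if e = e0 then a e else 0)"
    unfolding p_def coeff_sum coeff_monom
    by (rule sum.cong) (use shift_nonneg \<open>e0 \<in> E\<close> in \<open>auto simp: nat_eq_iff2\<close>)
  thus ?thesis using fin \<open>e0 \<in> E\<close> \<open>p = 0\<close> by simp
qed

lemma laurent_coeffs_unique:
  fixes a b :: "int \<Rightarrow> real"
  assumes "finite E" "finite E'"
    and eq: "\<And>t. t > 1 \<Longrightarrow> (\<Sum>e\<in>E. a e * t powi e) = (\<Sum>e\<in>E'. b e * t powi e)"
  shows "(if e \<in> E then a e else 0) = (if e \<in> E' then b e else 0)"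
proof -
  define c where "c e = (if e \<in> E then a e else 0) - (if e \<in> E' then b e else 0)" for e
  have "(\<Sum>e\<in>E \<union> E'. c e * t powi e) = 0" if "t > 1" for t :: real
  proof -
    have "(\<Sum>e\<in>E \<union> E'. c e * t powi e) = (\<Sum>e\<in>E \<union> E'. if e \<in> E then a e * t powi e else 0)
        - (\<Sum>e\<in>E \<union> E'. if e \<in> E' then b e * t powi e else 0)"
      unfolding c_def sum_subtractf[symmetric] by (rule sum.cong) (auto simp: algebra_simps)
    also have "\<dots> = (\<Sum>e\<in>E. a e * t powi e) - (\<Sum>e\<in>E'. b e * t powi e)"
      using assms(1,2) by (simp add: sum.If_cases Int_absorb1)
    finally show ?thesis using eq[OF that] by simp
  qed
  hence "e \<in> E \<union> E' \<Longrightarrow> c e = 0"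
    using laurent_coeff_eq_0[of "E \<union> E'" c e] assms(1,2) by blast
  thus ?thesis unfolding c_def by auto
qed

lemma poly_eq_smult_prod_roots:
  fixes p :: "'a::idom poly"
  assumes deg: "degree p \<le> N" and inj: "inj_on z {1..N}"
    and roots: "\<And>i. i \<in> {1..N} \<Longrightarrow> poly p (z i) = 0"
  shows "p = smult (coeff p N) (\<Prod>i=1..N. [:- z i, 1:])"
proof -
  define Q where "Q = (\<Prod>i=1..N. [:- z i, 1:])"
  have degQ: "degree Q = N" unfolding Q_def by (subst degree_prod_sum_eq) auto
  have "coeff Q N = 1"
    using lead_coeff_prod[of "\<lambda>i. [:- z i, 1:]" "{1..N}"] degQ unfolding Q_def by simp
  moreover have "poly Q (z i) = 0" if "i \<in> {1..N}" for i
    unfolding Q_def poly_prod using that by (intro prod_zero) auto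
  ultimately show ?thesis
    unfolding Q_def[symmetric]
    using deg degQ roots card_image[OF inj]
    by (intro poly_eqI_degree_lead_coeff[where A = "z ` {1..N}"]) auto
qed

lemma prod_monom:
  fixes f :: "'b \<Rightarrow> 'a::comm_semiring_1"
  shows "finite A \<Longrightarrow> (\<Prod>x\<in>A. monom (f x) (g x)) = monom (\<Prod>x\<in>A. f x) (\<Sum>x\<in>A. g x)"
  by (induction A rule: finite_induct) (auto simp: mult_monom)

lemma coeff_prod_linear_factors:
  fixes v :: "'b \<Rightarrow> 'a::comm_semiring_1"
  assumes "finite A"
  shows "coeff (\<Prod>a\<in>A. [:1, v a:]) k = (\<Sum>B | B \<subseteq> A \<and> card B = k. \<Prod>b\<in>B. v b)"
proof -
  have "(\<Prod>a\<in>A. [:1, v a:]) = (\<Prod>a\<in>A. monom (v a) 1 + 1)"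
    by (intro prod.cong) (auto simp: monom_Suc one_pCons monom_0)
  also have "\<dots> = (\<Sum>B\<in>Pow A. (\<Prod>a\<in>B. monom (v a) 1) * (\<Prod>a\<in>A - B. 1))"
    by (rule prod_add[OF assms])
  also have "\<dots> = (\<Sum>B\<in>Pow A. monom (\<Prod>b\<in>B. v b) (card B))"
    by (intro sum.cong refl) (subst prod_monom, auto intro: finite_subset[OF _ assms])
  finally have "coeff (\<Prod>a\<in>A. [:1, v a:]) k = (\<Sum>B\<in>Pow A. if card B = k then \<Prod>b\<in>B. v b else 0)"
    by (simp add: coeff_sum coeff_monom eq_commute)
  also have "\<dots> = (\<Sum>B\<in>{B \<in> Pow A. card B = k}. \<Prod>b\<in>B. v b)"
    using assms by (intro sum.inter_filter[symmetric]) auto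
  finally show ?thesis by (simp add: Collect_conj_eq Pow_def)
qed

lemma coeff_mult_linear:
  fixes p :: "'a::comm_ring_1 poly"
  shows "coeff (p * [:1, b:]) j = coeff p j + (if j = 0 then 0 else b * coeff p (j - 1))"
proof -
  have "p * [:1, b:] = p + pCons 0 (smult b p)"
    by (simp add: mult.commute[of p] mult_pCons_left)
  thus ?thesis by (cases j) (simp_all add: coeff_pCons)
qed

section \<open>Determinants of type B\<close>

fun chebU :: "nat \<Rightarrow> real poly" where
  "chebU 0 = 1"
| "chebU (Suc 0) = [:0, 1:]"
| "chebU (Suc (Suc k)) = pCons 0 (chebU (Suc k)) - chebU k"

lemma coeff_chebU: "coeff (chebU k) k = 1 \<and> (\<forall>j>k. coeff (chebU k) j = 0)"
proof (induction k rule: chebU.induct)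
  case (3 k)
  have "coeff (chebU (Suc (Suc k))) (Suc j) = 0" if "j > Suc k" for j
    using 3 that by simp
  hence "coeff (chebU (Suc (Suc k))) j = 0" if "j > Suc (Suc k)" for j
    using that by (cases j) auto
  thus ?case using 3 by simp
qed (auto simp: coeff_1 coeff_pCons split: nat.splits)

lemma degree_chebU: "degree (chebU k) = k"
  using coeff_chebU[of k] by (metis le_degree leI antisym degree_le zero_neq_one)

lemma chebU_recip_sum:
  fixes t :: real
  assumes "t \<noteq> 0"
  shows "(t - 1/t) * poly (chebU k) (t + 1/t) = t ^ Suc k - (1/t) ^ Suc k"
proof (induction k rule: chebU.induct)
  case (3 k)
  have "poly (chebU (Suc (Suc k))) (t + 1/t) = (t + 1/t) * poly (chebU (Suc k)) (t + 1/t) - poly (chebU k) (t + 1/t)"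
    by simp
  hence "(t - 1/t) * poly (chebU (Suc (Suc k))) (t + 1/t)
     = (t + 1/t) * ((t - 1/t) * poly (chebU (Suc k)) (t + 1/t)) - (t - 1/t) * poly (chebU k) (t + 1/t)"
    by (simp only: right_diff_distrib mult.left_commute)
  also have "\<dots> = (t + 1/t) * (t ^ Suc (Suc k) - (1/t) ^ Suc (Suc k)) - (t ^ Suc k - (1/t) ^ Suc k)"
    using 3 by simp
  also have "\<dots> = t ^ Suc (Suc (Suc k)) - (1/t) ^ Suc (Suc (Suc k))"
    using assms by (simp add: field_simps)
  finally show ?case .
qed (use assms in \<open>simp_all add: field_simps power2_eq_square\<close>)

definition antipow :: "nat \<Rightarrow> real \<Rightarrow> real" where
  "antipow m x = x ^ m - (1/x) ^ m"

definition antipow_mat :: "nat \<Rightarrow> (nat \<Rightarrow> nat) \<Rightarrow> (nat \<Rightarrow> real) \<Rightarrow> real mat" where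
  "antipow_mat N ex x = mat N N (\<lambda>(i, j). antipow (ex j) (x (Suc i)))"

definition denom_det :: "nat \<Rightarrow> (nat \<Rightarrow> real) \<Rightarrow> real" where
  "denom_det N x = det (antipow_mat N (\<lambda>j. N - j) x)"

text \<open>The exponents \<open>N+1, \<dots>, 1\<close> with \<open>N+1-j\<close> omitted: \<open>minor_det N x j\<close> is the minor of the
  matrix of \<open>denom_det (Suc N) x\<close> obtained by deleting the last row and column \<open>j\<close>.\<close>

definition exps_without :: "nat \<Rightarrow> nat \<Rightarrow> nat \<Rightarrow> nat" where
  "exps_without N j c = (if c < j then Suc N - c else N - c)"

definition minor_det :: "nat \<Rightarrow> (nat \<Rightarrow> real) \<Rightarrow> nat \<Rightarrow> real" where
  "minor_det N x j = det (antipow_mat N (exps_without N j) x)"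

definition recip_sum :: "(nat \<Rightarrow> real) \<Rightarrow> nat \<Rightarrow> real" where
  "recip_sum x i = x i + 1 / x i"

definition incr_gt1 :: "nat \<Rightarrow> (nat \<Rightarrow> real) \<Rightarrow> bool" where
  "incr_gt1 N x \<longleftrightarrow> (\<forall>i\<in>{1..N}. x i > 1) \<and> (\<forall>i j. 1 \<le> i \<longrightarrow> i < j \<longrightarrow> j \<le> N \<longrightarrow> x i < x j)"

lemma antipow_mat_carrier: "antipow_mat N ex x \<in> carrier_mat N N"
  unfolding antipow_mat_def by simp

lemma minor_det_upd: "minor_det N (x(Suc N := t)) j = minor_det N x j"
  unfolding minor_det_def antipow_mat_def by (rule arg_cong[of _ _ det], rule eq_matI) auto

lemma minor_det_0: "minor_det N x 0 = denom_det N x"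
  unfolding minor_det_def denom_det_def exps_without_def by simp

lemma laplace_antipow_mat:
  "det (antipow_mat (Suc N) (\<lambda>j. Suc N - j) x) =
     (\<Sum>j<Suc N. antipow (Suc N - j) (x (Suc N)) * ((-1) ^ (N + j) * minor_det N x j))"
proof -
  let ?A = "antipow_mat (Suc N) (\<lambda>j. Suc N - j) x"
  have "det ?A = (\<Sum>j<Suc N. ?A $$ (N, j) * cofactor ?A N j)"
    by (rule laplace_expansion_row[OF antipow_mat_carrier]) simp
  also have "\<dots> = (\<Sum>j<Suc N. antipow (Suc N - j) (x (Suc N)) * ((-1) ^ (N + j) * minor_det N x j))"
  proof (intro sum.cong refl)
    fix j assume j: "j \<in> {..<Suc N}"
    have "mat_delete ?A N j = antipow_mat N (exps_without N j) x"
      by (rule eq_matI) (use j in \<open>auto simp: mat_delete_def antipow_mat_def exps_without_def\<close>)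
    thus "?A $$ (N, j) * cofactor ?A N j = antipow (Suc N - j) (x (Suc N)) * ((-1) ^ (N + j) * minor_det N x j)"
      using j by (simp add: cofactor_def minor_det_def antipow_mat_def)
  qed
  finally show ?thesis .
qed

text \<open>The Laplace expansion along the last row, as a polynomial in \<open>z = t + 1/t\<close> where \<open>t\<close> is
  the last variable.\<close>

definition laplace_poly :: "nat \<Rightarrow> (nat \<Rightarrow> real) \<Rightarrow> real poly" where
  "laplace_poly N x = (\<Sum>j<Suc N. smult ((-1) ^ (N + j) * minor_det N x j) (chebU (N - j)))"

lemma det_antipow_mat_Suc:
  assumes "t \<noteq> 0"
  shows "det (antipow_mat (Suc N) (\<lambda>j. Suc N - j) (x(Suc N := t))) =
    (t - 1/t) * poly (laplace_poly N x) (t + 1/t)"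
proof -
  have "det (antipow_mat (Suc N) (\<lambda>j. Suc N - j) (x(Suc N := t))) =
      (\<Sum>j<Suc N. (t - 1/t) * (((-1) ^ (N + j) * minor_det N x j) * poly (chebU (N - j)) (t + 1/t)))"
    unfolding laplace_antipow_mat minor_det_upd
  proof (intro sum.cong refl)
    fix j assume "j \<in> {..<Suc N}"
    hence "antipow (Suc N - j) t = (t - 1/t) * poly (chebU (N - j)) (t + 1/t)"
      unfolding antipow_def using chebU_recip_sum[OF assms, of "N - j"] by (simp add: Suc_diff_le)
    thus "antipow (Suc N - j) ((x(Suc N := t)) (Suc N)) * ((-1) ^ (N + j) * minor_det N x j) =
        (t - 1/t) * (((-1) ^ (N + j) * minor_det N x j) * poly (chebU (N - j)) (t + 1/t))"
      by simp
  qed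
  thus ?thesis
    unfolding laplace_poly_def by (simp add: poly_sum sum_distrib_left del: sum.lessThan_Suc)
qed

lemma degree_laplace_poly: "degree (laplace_poly N x) \<le> N"
  unfolding laplace_poly_def
  by (intro degree_sum_le) (auto intro: order.trans[OF degree_smult_le] simp: degree_chebU)

lemma coeff_laplace_poly: "coeff (laplace_poly N x) N = (-1) ^ N * denom_det N x"
proof -
  have "(-1) ^ (N + j) * minor_det N x j * coeff (chebU (N - j)) N = (if j = 0 then (-1) ^ N * denom_det N x else 0)"
    if "j < Suc N" for j
    using coeff_chebU[of "N - j"] that by (auto simp: minor_det_0)
  thus ?thesis unfolding laplace_poly_def by (simp add: coeff_sum del: sum.lessThan_Suc)
qed

lemma plus_inverse_strict_mono:
  fixes a b :: real
  assumes "1 < a" "a < b"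
  shows "a + 1/a < b + 1/b"
proof -
  have "b + 1/b - (a + 1/a) = (b - a) * (1 - 1/(a*b))"
    using assms by (simp add: field_simps)
  moreover have "1/(a*b) < 1"
    using assms by (simp add: field_simps) (metis less_trans mult_strict_mono' less_le_not_le mult_1 zero_le_one)
  ultimately show ?thesis using assms by (smt (verit) mult_pos_pos)
qed

lemma inj_on_recip_sum: "incr_gt1 N x \<Longrightarrow> inj_on (recip_sum x) {1..N}"
  unfolding inj_on_def incr_gt1_def recip_sum_def
  by (metis linorder_neqE_nat plus_inverse_strict_mono less_irrefl atLeastAtMost_iff)

lemma laplace_poly_root:
  assumes "incr_gt1 N x" "i \<in> {1..N}"
  shows "poly (laplace_poly N x) (recip_sum x i) = 0"
proof -
  have xi: "x i > 1" using assms unfolding incr_gt1_def by auto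
  let ?x = "x(Suc N := x i)"
  have "det (antipow_mat (Suc N) (\<lambda>j. Suc N - j) ?x) = 0"
  proof (rule det_identical_rows[OF antipow_mat_carrier, of "i - 1" N])
    show "row (antipow_mat (Suc N) (\<lambda>j. Suc N - j) ?x) (i - 1) = row (antipow_mat (Suc N) (\<lambda>j. Suc N - j) ?x) N"
      using assms(2) unfolding antipow_mat_def by (auto simp: row_mat)
  qed (use assms(2) in auto)
  moreover have "x i - 1 / x i \<noteq> 0" using xi by (smt (verit) less_divide_eq_1_pos)
  ultimately show ?thesis
    using det_antipow_mat_Suc[of "x i" N x] xi unfolding recip_sum_def by simp
qed

lemma laplace_poly_eq:
  assumes "incr_gt1 N x"
  shows "laplace_poly N x = smult ((-1) ^ N * denom_det N x) (\<Prod>i=1..N. [:- recip_sum x i, 1:])"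
  using poly_eq_smult_prod_roots[OF degree_laplace_poly inj_on_recip_sum[OF assms]]
    laplace_poly_root[OF assms] coeff_laplace_poly by simp

lemma incr_gt1_Suc: "incr_gt1 (Suc N) x \<Longrightarrow> incr_gt1 N x"
  unfolding incr_gt1_def by auto

theorem denom_det_eq:
  "incr_gt1 N x \<Longrightarrow> denom_det N x =
     (\<Prod>i=1..N. x i - 1 / x i) * (\<Prod>i=1..N. \<Prod>j=Suc i..N. recip_sum x i - recip_sum x j)"
proof (induction N)
  case 0
  show ?case unfolding denom_det_def by (simp add: det_dim_zero[OF antipow_mat_carrier])
next
  case (Suc N)
  have inc: "incr_gt1 N x" using incr_gt1_Suc[OF Suc.prems] .
  define t where "t = x (Suc N)"
  have "t > 1" using Suc.prems unfolding incr_gt1_def t_def by auto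
  have last_col: "(-1) ^ N * (\<Prod>i=1..N. t + 1/t - recip_sum x i) = (\<Prod>i=1..N. recip_sum x i - recip_sum x (Suc N))"
    using prod_uminus[of "\<lambda>i. t + 1/t - recip_sum x i" "{1..N}"] by (simp add: t_def recip_sum_def)
  have "denom_det (Suc N) x = det (antipow_mat (Suc N) (\<lambda>j. Suc N - j) (x(Suc N := t)))"
    unfolding denom_det_def t_def by simp
  also have "\<dots> = (t - 1/t) * ((-1) ^ N * denom_det N x * (\<Prod>i=1..N. t + 1/t - recip_sum x i))"
    using \<open>t > 1\<close> by (simp add: det_antipow_mat_Suc laplace_poly_eq[OF inc] poly_prod)
  also have "\<dots> = (t - 1/t) * denom_det N x * (\<Prod>i=1..N. recip_sum x i - recip_sum x (Suc N))"
    unfolding last_col[symmetric] by (simp add: algebra_simps)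
  also have "\<dots> = (\<Prod>i=1..Suc N. x i - 1 / x i) * (\<Prod>i=1..Suc N. \<Prod>j=Suc i..Suc N. recip_sum x i - recip_sum x j)"
  proof -
    have "(\<Prod>i=1..Suc N. \<Prod>j=Suc i..Suc N. recip_sum x i - recip_sum x j)
        = (\<Prod>i=1..N. \<Prod>j=Suc i..N. recip_sum x i - recip_sum x j) * (\<Prod>i=1..N. recip_sum x i - recip_sum x (Suc N))"
      by (simp add: prod.cl_ivl_Suc prod.distrib)
    thus ?thesis using Suc.IH[OF inc] unfolding t_def by (simp add: prod.cl_ivl_Suc algebra_simps)
  qed
  finally show ?case .
qed

definition signed_vars :: "nat \<Rightarrow> (nat \<times> bool) set" where
  "signed_vars n = {1..n} \<times> UNIV"

definition signed_val :: "(nat \<Rightarrow> real) \<Rightarrow> nat \<times> bool \<Rightarrow> real" where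
  "signed_val x b = (if snd b then x (fst b) else 1 / x (fst b))"

text \<open>Elementary symmetric functions of the \<open>2n\<close> values \<open>x\<^sub>i\<close>, \<open>1/x\<^sub>i\<close>.\<close>

definition esym :: "nat \<Rightarrow> (nat \<Rightarrow> real) \<Rightarrow> nat \<Rightarrow> real" where
  "esym n x j = coeff (\<Prod>b\<in>signed_vars n. [:1, signed_val x b:]) j"

definition neg_factor_poly :: "nat \<Rightarrow> (nat \<Rightarrow> real) \<Rightarrow> real poly" where
  "neg_factor_poly n x = (\<Prod>b\<in>signed_vars n. [:1, - signed_val x b:])"

lemma finite_signed_vars [simp]: "finite (signed_vars n)"
  unfolding signed_vars_def by simp

lemma esym_eq_sum: "esym n x k = (\<Sum>B | B \<subseteq> signed_vars n \<and> card B = k. \<Prod>b\<in>B. signed_val x b)"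
  unfolding esym_def by (rule coeff_prod_linear_factors) simp

lemma coeff_neg_factor_poly: "coeff (neg_factor_poly n x) k = (-1) ^ k * esym n x k"
proof -
  have "coeff (neg_factor_poly n x) k = (\<Sum>B | B \<subseteq> signed_vars n \<and> card B = k. \<Prod>b\<in>B. - signed_val x b)"
    unfolding neg_factor_poly_def by (rule coeff_prod_linear_factors) simp
  also have "\<dots> = (\<Sum>B | B \<subseteq> signed_vars n \<and> card B = k. (-1) ^ k * (\<Prod>b\<in>B. signed_val x b))"
    by (intro sum.cong refl) (auto simp: prod_uminus)
  finally show ?thesis by (simp add: esym_eq_sum sum_distrib_left)
qed

lemma poly_neg_factor_poly:
  assumes "\<forall>i\<in>{1..n}. x i \<noteq> 0" "t \<noteq> 0"
  shows "poly (neg_factor_poly n x) t = t ^ n * (\<Prod>i=1..n. t + 1/t - recip_sum x i)"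
proof -
  have "poly (neg_factor_poly n x) t = (\<Prod>i=1..n. \<Prod>b\<in>UNIV. 1 - t * signed_val x (i, b))"
    unfolding neg_factor_poly_def signed_vars_def poly_prod by (simp add: prod.cartesian_product')
  also have "\<dots> = (\<Prod>i=1..n. t * (t + 1/t - recip_sum x i))"
  proof (intro prod.cong refl)
    fix i assume "i \<in> {1..n}"
    hence "x i \<noteq> 0" using assms by auto
    hence "(1 - t * x i) * (1 - t / x i) = t * (t + 1/t - recip_sum x i)"
      using assms(2) by (simp add: recip_sum_def field_simps)
    thus "(\<Prod>b\<in>UNIV. 1 - t * signed_val x (i, b)) = t * (t + 1/t - recip_sum x i)"
      by (simp add: UNIV_bool signed_val_def mult.commute[of "1 - t / x i"])
  qed
  finally show ?thesis by (simp add: prod.distrib)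
qed

lemma power_Suc_mult_diff:
  fixes t :: real
  assumes "t \<noteq> 0" "j \<le> n"
  shows "t ^ Suc n * (t ^ (Suc n - j) - (1/t) ^ (Suc n - j)) = t ^ (2 * n + 2 - j) - t ^ j"
proof -
  have "2 * n + 2 - j = (Suc n - j) + j + (Suc n - j)" using assms(2) by simp
  hence "t ^ Suc n = t ^ (Suc n - j) * t ^ j" "t ^ (2 * n + 2 - j) = t ^ (Suc n - j) * t ^ j * t ^ (Suc n - j)"
    using assms(2) by (simp_all only: power_add[symmetric]) simp_all
  moreover have "t ^ (Suc n - j) * (1/t) ^ (Suc n - j) = 1"
    using assms(1) by (simp add: power_one_over field_simps)
  ultimately show ?thesis by (simp add: algebra_simps)
qed

lemma laplace_poly_antipow_expansion:
  assumes "t \<noteq> 0"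
  shows "t ^ Suc n * (t - 1/t) * poly (laplace_poly n x) (t + 1/t) =
    (\<Sum>j<Suc n. (-1) ^ (n + j) * minor_det n x j * (t ^ (2 * n + 2 - j) - t ^ j))"
proof -
  have "t ^ Suc n * (t - 1/t) * poly (laplace_poly n x) (t + 1/t) =
      (\<Sum>j<Suc n. (-1) ^ (n + j) * minor_det n x j * (t ^ Suc n * ((t - 1/t) * poly (chebU (n - j)) (t + 1/t))))"
    unfolding laplace_poly_def by (simp add: poly_sum sum_distrib_left algebra_simps del: sum.lessThan_Suc)
  also have "\<dots> = (\<Sum>j<Suc n. (-1) ^ (n + j) * minor_det n x j * (t ^ (2 * n + 2 - j) - t ^ j))"
  proof (intro sum.cong refl)
    fix j assume "j \<in> {..<Suc n}"
    hence j: "j \<le> n" by simp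
    show "(-1) ^ (n + j) * minor_det n x j * (t ^ Suc n * ((t - 1/t) * poly (chebU (n - j)) (t + 1/t))) =
        (-1) ^ (n + j) * minor_det n x j * (t ^ (2 * n + 2 - j) - t ^ j)"
      using chebU_recip_sum[OF assms, of "n - j"] power_Suc_mult_diff[OF assms j] j
      by (simp add: Suc_diff_le)
  qed
  finally show ?thesis .
qed

text \<open>Both sides are \<open>t\<^sup>n\<^sup>+\<^sup>1 (t - 1/t) L(t + 1/t)\<close> for the Laplace polynomial \<open>L\<close>: on the left
  from its definition, on the right from its factorization through the roots \<open>x\<^sub>i + 1/x\<^sub>i\<close>.\<close>

lemma antipow_laplace_poly_identity:
  assumes inc: "incr_gt1 n x"
  shows "(\<Sum>j<Suc n. smult ((-1) ^ (n + j) * minor_det n x j) (monom 1 (2 * n + 2 - j) - monom 1 j)) =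
    smult ((-1) ^ n * denom_det n x) (pCons 0 (pCons 0 (neg_factor_poly n x)) - neg_factor_poly n x)"
    (is "?L = ?R")
proof (rule poly_eqI_gt1)
  fix t :: real assume "t > 1"
  hence t0: "t \<noteq> 0" by simp
  have x_nz: "\<forall>i\<in>{1..n}. x i \<noteq> 0" using inc unfolding incr_gt1_def by fastforce
  have "poly ?L t = t ^ Suc n * (t - 1/t) * poly (laplace_poly n x) (t + 1/t)"
    unfolding laplace_poly_antipow_expansion[OF t0]
    by (simp add: poly_sum poly_monom del: sum.lessThan_Suc)
  also have "\<dots> = t ^ Suc n * (t - 1/t) * ((-1) ^ n * denom_det n x * (\<Prod>i=1..n. t + 1/t - recip_sum x i))"
    unfolding laplace_poly_eq[OF inc] by (simp add: poly_prod)
  also have "\<dots> = (-1) ^ n * denom_det n x * (t * t - 1) * (t ^ n * (\<Prod>i=1..n. t + 1/t - recip_sum x i))"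
    using t0 by (simp add: field_simps)
  also have "\<dots> = poly ?R t"
    using poly_neg_factor_poly[OF x_nz t0] by (simp add: algebra_simps)
  finally show "poly ?L t = poly ?R t" .
qed

theorem minor_det_eq_esym:
  assumes inc: "incr_gt1 n x" and "s \<le> n"
  shows "minor_det n x s = denom_det n x * (esym n x s - (if 2 \<le> s then esym n x (s - 2) else 0))"
proof -
  have "coeff (\<Sum>j<Suc n. smult ((-1) ^ (n + j) * minor_det n x j) (monom 1 (2 * n + 2 - j) - monom 1 j)) s =
      (\<Sum>j<Suc n. (-1) ^ (n + j) * minor_det n x j * ((if 2 * n + 2 - j = s then 1 else 0) - (if j = s then 1 else 0)))"
    by (simp add: coeff_sum coeff_monom del: sum.lessThan_Suc)
  also have "\<dots> = (\<Sum>j<Suc n. if j = s then - ((-1) ^ (n + j) * minor_det n x j) else 0)"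
    by (intro sum.cong refl) (use \<open>s \<le> n\<close> in auto)
  also have "\<dots> = - ((-1) ^ (n + s) * minor_det n x s)"
    using \<open>s \<le> n\<close> by simp
  finally have "coeff (smult ((-1) ^ n * denom_det n x) (pCons 0 (pCons 0 (neg_factor_poly n x)) - neg_factor_poly n x)) s
      = - ((-1) ^ (n + s) * minor_det n x s)"
    unfolding antipow_laplace_poly_identity[OF inc] .
  moreover have "coeff (smult ((-1) ^ n * denom_det n x) (pCons 0 (pCons 0 (neg_factor_poly n x)) - neg_factor_poly n x)) s
      = (-1) ^ (n + s) * denom_det n x * ((if 2 \<le> s then esym n x (s - 2) else 0) - esym n x s)"
  proof -
    have "coeff (pCons 0 (pCons 0 (neg_factor_poly n x))) s =
        (if 2 \<le> s then (-1) ^ s * esym n x (s - 2) else 0)"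
    proof (cases "2 \<le> s")
      case True
      then obtain k where "s = Suc (Suc k)" using le_iff_add by (metis add_2_eq_Suc)
      thus ?thesis by (simp add: coeff_neg_factor_poly)
    qed (cases s, auto simp: coeff_pCons split: nat.split)
    thus ?thesis by (simp add: coeff_neg_factor_poly power_add algebra_simps)
  qed
  ultimately have "(-1) ^ (n + s) * (minor_det n x s - denom_det n x *
      (esym n x s - (if 2 \<le> s then esym n x (s - 2) else 0))) = 0"
    by (simp add: algebra_simps)
  thus ?thesis by simp
qed

section \<open>Positive roots and Kostant partitions\<close>

definition root_diff :: "nat \<Rightarrow> nat \<Rightarrow> nat \<Rightarrow> int" where
  "root_diff i j = (\<lambda>k. eps2 i k - eps2 j k)"

definition root_sum :: "nat \<Rightarrow> nat \<Rightarrow> nat \<Rightarrow> int" where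
  "root_sum i j = (\<lambda>k. eps2 i k + eps2 j k)"

definition lt_pairs :: "nat \<Rightarrow> (nat \<times> nat) set" where
  "lt_pairs n = {(i, j). 1 \<le> i \<and> i < j \<and> j \<le> n}"

lemma lt_pairs_Sigma: "lt_pairs n = Sigma {1..n} (\<lambda>i. {Suc i..n})"
  unfolding lt_pairs_def by auto

lemma finite_lt_pairs [simp]: "finite (lt_pairs n)"
  unfolding lt_pairs_Sigma by simp

lemma posroots_eq:
  "posroots n = (\<lambda>(i, j). root_diff i j) ` lt_pairs n \<union> (\<lambda>(i, j). root_sum i j) ` lt_pairs n \<union> eps2 ` {1..n}"
  unfolding posroots_def root_diff_def root_sum_def lt_pairs_def by (auto simp: image_def)

lemma finite_posroots [simp]: "finite (posroots n)"
  unfolding posroots_eq by simp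

lemma posroots_outside: "a \<in> posroots n \<Longrightarrow> k \<notin> {1..n} \<Longrightarrow> a k = 0"
  unfolding posroots_eq root_diff_def root_sum_def eps2_def lt_pairs_def by auto

lemma root_diff_apply: "i \<noteq> j \<Longrightarrow> root_diff i j k = (if k = i then 2 else if k = j then -2 else 0)"
  unfolding root_diff_def eps2_def by auto

lemma root_sum_apply: "i \<noteq> j \<Longrightarrow> root_sum i j k = (if k = i then 2 else if k = j then 2 else 0)"
  unfolding root_sum_def eps2_def by auto

lemma inj_on_root_diff: "inj_on (\<lambda>(i, j). root_diff i j) (lt_pairs n)"
proof (rule inj_onI, clarify)
  fix i j i' j' assume "(i, j) \<in> lt_pairs n" "(i', j') \<in> lt_pairs n" and eq: "root_diff i j = root_diff i' j'"
  hence "i < j" "i' < j'" unfolding lt_pairs_def by auto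
  have "root_diff i' j' i = 2" "root_diff i' j' j = -2"
    using fun_cong[OF eq, of i] fun_cong[OF eq, of j] root_diff_apply[of i j] \<open>i < j\<close> by auto
  thus "i = i' \<and> j = j'" using root_diff_apply[of i' j'] \<open>i' < j'\<close> by (auto split: if_splits)
qed

lemma inj_on_root_sum: "inj_on (\<lambda>(i, j). root_sum i j) (lt_pairs n)"
proof (rule inj_onI, clarify)
  fix i j i' j' assume "(i, j) \<in> lt_pairs n" "(i', j') \<in> lt_pairs n" and eq: "root_sum i j = root_sum i' j'"
  hence "i < j" "i' < j'" unfolding lt_pairs_def by auto
  have "root_sum i' j' i = 2" "root_sum i' j' j = 2" "root_sum i j i' = 2" "root_sum i j j' = 2"
    using fun_cong[OF eq, of i] fun_cong[OF eq, of j] fun_cong[OF eq, of i'] fun_cong[OF eq, of j']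
      root_sum_apply[of i j] root_sum_apply[of i' j'] \<open>i < j\<close> \<open>i' < j'\<close> by auto
  hence "i \<in> {i', j'}" "j \<in> {i', j'}" "i' \<in> {i, j}" "j' \<in> {i, j}"
    using root_sum_apply[of i' j'] root_sum_apply[of i j] \<open>i < j\<close> \<open>i' < j'\<close> by (auto split: if_splits)
  thus "i = i' \<and> j = j'" using \<open>i < j\<close> \<open>i' < j'\<close> by auto
qed

lemma inj_on_eps2: "inj_on eps2 {1..n}"
  by (rule inj_onI) (metis eps2_def zero_neq_numeral)

lemma root_diff_neq_root_sum: "i < j \<Longrightarrow> root_diff i j \<noteq> root_sum i' j'"
  by (auto dest!: fun_cong[of _ _ j] simp: root_diff_def root_sum_def eps2_def split: if_splits)

lemma eps2_neq_root_diff: "i < j \<Longrightarrow> eps2 l \<noteq> root_diff i j"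
  by (auto dest!: fun_cong[of _ _ j] simp: root_diff_def eps2_def split: if_splits)

lemma eps2_neq_root_sum: "i < j \<Longrightarrow> eps2 l \<noteq> root_sum i j"
proof
  assume "i < j" and eq: "eps2 l = root_sum i j"
  have "eps2 l i = 2" "eps2 l j = 2"
    using fun_cong[OF eq, of i] fun_cong[OF eq, of j] \<open>i < j\<close> by (simp_all add: root_sum_apply)
  thus False using \<open>i < j\<close> by (auto simp: eps2_def split: if_splits)
qed

lemma prod_posroots:
  "(\<Prod>a\<in>posroots n. h a) =
     (\<Prod>(i, j)\<in>lt_pairs n. h (root_diff i j) * h (root_sum i j)) * (\<Prod>i=1..n. h (eps2 i))"
proof -
  let ?D = "(\<lambda>(i, j). root_diff i j) ` lt_pairs n" and ?S = "(\<lambda>(i, j). root_sum i j) ` lt_pairs n"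
  have "?D \<inter> ?S = {}"
    by (auto simp: lt_pairs_def root_diff_neq_root_sum)
  moreover have "(?D \<union> ?S) \<inter> eps2 ` {1..n} = {}"
    by (auto simp: lt_pairs_def eps2_neq_root_diff eps2_neq_root_sum)
  ultimately have "(\<Prod>a\<in>posroots n. h a) = (\<Prod>a\<in>?D. h a) * (\<Prod>a\<in>?S. h a) * (\<Prod>a\<in>eps2 ` {1..n}. h a)"
    unfolding posroots_eq by (simp add: prod.union_disjoint)
  also have "\<dots> = (\<Prod>(i, j)\<in>lt_pairs n. h (root_diff i j)) * (\<Prod>(i, j)\<in>lt_pairs n. h (root_sum i j))
      * (\<Prod>i=1..n. h (eps2 i))"
    unfolding prod.reindex[OF inj_on_root_diff] prod.reindex[OF inj_on_root_sum] prod.reindex[OF inj_on_eps2]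
    by (simp add: comp_def prod.case_distrib)
  finally show ?thesis by (simp add: prod.distrib split_def)
qed

definition height :: "nat \<Rightarrow> (nat \<Rightarrow> int) \<Rightarrow> int" where
  "height n v = (\<Sum>i=1..n. int (n + 1 - i) * v i)"

definition vsum :: "(nat \<Rightarrow> int) set \<Rightarrow> nat \<Rightarrow> int" where
  "vsum S = (\<lambda>k. \<Sum>a\<in>S. a k)"

lemma height_sum: "height n (\<lambda>k. \<Sum>a\<in>R. f a * a k) = (\<Sum>a\<in>R. f a * height n a)"
  unfolding height_def by (simp add: sum_distrib_left mult.left_commute) (rule sum.swap)

lemma height_vsum: "height n (vsum S) = (\<Sum>a\<in>S. height n a)"
  using height_sum[of n "\<lambda>_. 1" S] unfolding vsum_def by simp

lemma height_add: "height n (\<lambda>k. u k + v k) = height n u + height n v"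
  unfolding height_def by (simp add: sum.distrib distrib_left)

lemma height_diff: "height n (\<lambda>k. u k - v k) = height n u - height n v"
  unfolding height_def by (simp add: sum_subtractf right_diff_distrib)

lemma height_eps2: "i \<in> {1..n} \<Longrightarrow> height n (eps2 i) = 2 * int (n + 1 - i)"
  unfolding height_def eps2_def by (simp add: if_distrib cong: if_cong)

lemma height_posroot_pos: "a \<in> posroots n \<Longrightarrow> height n a > 0"
  unfolding posroots_eq lt_pairs_def root_diff_def root_sum_def
  by (auto simp: height_diff height_add height_eps2)

lemma vsum_insert: "finite S \<Longrightarrow> a \<notin> S \<Longrightarrow> vsum (insert a S) = (\<lambda>k. a k + vsum S k)"
  unfolding vsum_def by auto

definition lincomb :: "(nat \<Rightarrow> int) set \<Rightarrow> ((nat \<Rightarrow> int) \<Rightarrow> nat) \<Rightarrow> nat \<Rightarrow> int" where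
  "lincomb R c = (\<lambda>k. \<Sum>a\<in>R. int (c a) * a k)"

definition root_partitions :: "(nat \<Rightarrow> int) set \<Rightarrow> (nat \<Rightarrow> int) \<Rightarrow> ((nat \<Rightarrow> int) \<Rightarrow> nat) set" where
  "root_partitions R nu = {c. (\<forall>a. a \<notin> R \<longrightarrow> c a = 0) \<and> lincomb R c = nu}"

definition npartitions :: "(nat \<Rightarrow> int) set \<Rightarrow> (nat \<Rightarrow> int) \<Rightarrow> nat" where
  "npartitions R nu = card (root_partitions R nu)"

lemma kostant_eq_npartitions: "kostant n = npartitions (posroots n)"
  unfolding kostant_def npartitions_def root_partitions_def lincomb_def by (rule ext) simp

lemma finite_root_partitions:
  assumes fin: "finite R" and pos: "\<forall>a\<in>R. height n a > 0"
  shows "finite (root_partitions R nu)"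
proof (rule finite_subset)
  show "root_partitions R nu \<subseteq> {c. \<forall>x. (x \<in> R \<longrightarrow> c x \<in> {0..nat (height n nu)}) \<and> (x \<notin> R \<longrightarrow> c x = 0)}"
  proof safe
    fix c x assume c: "c \<in> root_partitions R nu" and "x \<in> R"
    have "height n x \<ge> 1" using pos \<open>x \<in> R\<close> by fastforce
    hence "int (c x) \<le> int (c x) * height n x"
      using mult_left_mono[of 1 "height n x" "int (c x)"] by simp
    also have "\<dots> \<le> (\<Sum>a\<in>R. int (c a) * height n a)"
      using fin \<open>x \<in> R\<close> pos by (intro member_le_sum) auto
    also have "\<dots> = height n nu"
      using c unfolding root_partitions_def lincomb_def by (auto simp: height_sum)
    finally show "c x \<in> {0..nat (height n nu)}" by auto
  qed (auto simp: root_partitions_def)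
  show "finite {c. \<forall>x. (x \<in> R \<longrightarrow> c x \<in> {0..nat (height n nu)}) \<and> (x \<notin> R \<longrightarrow> c x = 0)}"
    by (rule finite_set_of_finite_funs) (use fin in auto)
qed

lemma lincomb_fun_upd:
  assumes "finite R" "a \<in> R"
  shows "lincomb R (c(a := v)) k = lincomb (R - {a}) c k + int v * a k"
proof -
  have "lincomb R (c(a := v)) k = int ((c(a := v)) a) * a k + (\<Sum>x\<in>R - {a}. int ((c(a := v)) x) * x k)"
    unfolding lincomb_def by (rule sum.remove[OF assms])
  also have "(\<Sum>x\<in>R - {a}. int ((c(a := v)) x) * x k) = lincomb (R - {a}) c k"
    unfolding lincomb_def by (rule sum.cong) auto
  finally show ?thesis by (simp only: fun_upd_same add.commute)
qed

lemma root_partitions_avoiding: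
  assumes "finite R" "a \<in> R"
  shows "{c \<in> root_partitions R nu. c a = 0} = root_partitions (R - {a}) nu"
proof -
  have "lincomb R c = lincomb (R - {a}) c" if "c a = 0" for c
    using lincomb_fun_upd[OF assms, of c 0] fun_upd_idem[of c a 0, OF that] by (simp add: fun_eq_iff)
  thus ?thesis unfolding root_partitions_def by auto
qed

lemma card_root_partitions_using:
  assumes "finite R" "a \<in> R"
  shows "card {c \<in> root_partitions R nu. c a \<noteq> 0} = npartitions R (\<lambda>k. nu k - a k)"
  unfolding npartitions_def
proof (rule bij_betw_same_card[of "\<lambda>c. c(a := c a - 1)"],
       rule bij_betw_byWitness[of _ "\<lambda>c. c(a := c a + 1)"])
  have upd: "lincomb R (c(a := c a + d - e)) k = lincomb R c k + (int d - int e) * a k"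
    if "e \<le> c a + d" for c :: "(nat \<Rightarrow> int) \<Rightarrow> nat" and d e k
    using lincomb_fun_upd[OF assms, of c "c a + d - e" k] lincomb_fun_upd[OF assms, of c "c a" k] that
    by (simp add: of_nat_diff algebra_simps)
  show "(\<lambda>c. c(a := c a - 1)) ` {c \<in> root_partitions R nu. c a \<noteq> 0} \<subseteq> root_partitions R (\<lambda>k. nu k - a k)"
    using upd[where d = 0 and e = 1] assms(2) by (auto simp: root_partitions_def)
  show "(\<lambda>c. c(a := c a + 1)) ` root_partitions R (\<lambda>k. nu k - a k) \<subseteq> {c \<in> root_partitions R nu. c a \<noteq> 0}"
    using upd[where d = 1 and e = 0] assms(2) by (auto simp: root_partitions_def)
qed auto

lemma npartitions_remove:
  assumes fin: "finite R" and pos: "\<forall>a\<in>R. height n a > 0" and a: "a \<in> R"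
  shows "npartitions R nu = npartitions (R - {a}) nu + npartitions R (\<lambda>k. nu k - a k)"
proof -
  have "root_partitions R nu = {c \<in> root_partitions R nu. c a = 0} \<union> {c \<in> root_partitions R nu. c a \<noteq> 0}"
    by auto
  hence "npartitions R nu = card {c \<in> root_partitions R nu. c a = 0} + card {c \<in> root_partitions R nu. c a \<noteq> 0}"
    unfolding npartitions_def using finite_root_partitions[OF fin pos]
    by (metis (no_types, lifting) card_Un_disjoint disjoint_iff finite_Un mem_Collect_eq)
  thus ?thesis
    unfolding root_partitions_avoiding[OF fin a] card_root_partitions_using[OF fin a] npartitions_def .
qed

text \<open>In formal power series, \<open>\<Prod>\<^sub>a\<^sub>\<in>\<^sub>R (1 - e\<^sup>a) \<cdot> \<Sum>\<^sub>\<nu> P\<^sub>R(\<nu>) e\<^sup>\<nu> = 1\<close>.\<close>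

lemma alternating_sum_npartitions:
  assumes "finite R" and "\<forall>a\<in>R. height n a > 0"
  shows "(\<Sum>S\<in>Pow R. (-1) ^ card S * int (npartitions R (\<lambda>k. nu k - vsum S k))) = (if nu = (\<lambda>_. 0) then 1 else 0)"
  using assms
proof (induction R arbitrary: nu rule: finite_induct)
  case empty
  have "root_partitions {} nu = (if nu = (\<lambda>_. 0) then {\<lambda>_. 0} else {})"
    unfolding root_partitions_def lincomb_def by (auto simp: fun_eq_iff)
  thus ?case by (simp add: npartitions_def vsum_def)
next
  case (insert a R)
  let ?P = "npartitions (insert a R)"
  have rec: "int (?P v) - int (?P (\<lambda>k. v k - a k)) = int (npartitions R v)" for v
    using npartitions_remove[of "insert a R" n a v] insert by simp
  have "(\<Sum>S\<in>insert a ` Pow R. (-1) ^ card S * int (?P (\<lambda>k. nu k - vsum S k)))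
      = (\<Sum>S\<in>Pow R. - ((-1) ^ card S * int (?P (\<lambda>k. (nu k - vsum S k) - a k))))"
  proof (subst sum.reindex)
    show "inj_on (insert a) (Pow R)"
      using insert.hyps(2) by (intro inj_onI) (metis Pow_iff insert_ident subsetD)
    have "card (insert a S) = Suc (card S)" "vsum (insert a S) = (\<lambda>k. a k + vsum S k)" if "S \<in> Pow R" for S
    proof -
      have "finite S" "a \<notin> S" using that insert.hyps finite_subset by auto
      thus "card (insert a S) = Suc (card S)" "vsum (insert a S) = (\<lambda>k. a k + vsum S k)"
        by (simp_all add: vsum_insert)
    qed
    thus "(\<Sum>S\<in>Pow R. ((\<lambda>S. (-1) ^ card S * int (?P (\<lambda>k. nu k - vsum S k))) \<circ> insert a) S) =
      (\<Sum>S\<in>Pow R. - ((-1) ^ card S * int (?P (\<lambda>k. nu k - vsum S k - a k))))"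
      by (intro sum.cong refl) (simp add: algebra_simps)
  qed
  hence "(\<Sum>S\<in>Pow (insert a R). (-1) ^ card S * int (?P (\<lambda>k. nu k - vsum S k)))
      = (\<Sum>S\<in>Pow R. (-1) ^ card S * (int (?P (\<lambda>k. nu k - vsum S k)) - int (?P (\<lambda>k. (nu k - vsum S k) - a k))))"
    unfolding Pow_insert using insert.hyps
    by (subst sum.union_disjoint) (auto simp: sum_subtractf right_diff_distrib sum_negf)
  also have "\<dots> = (\<Sum>S\<in>Pow R. (-1) ^ card S * int (npartitions R (\<lambda>k. nu k - vsum S k)))"
    unfolding rec ..
  also have "\<dots> = (if nu = (\<lambda>_. 0) then 1 else 0)" using insert by simp
  finally show ?case .
qed

section \<open>Multiplication by the Weyl denominator\<close>

text \<open>The coefficient of \<open>e\<^sup>\<mu>\<close> in \<open>\<Prod>\<^sub>a\<^sub>>\<^sub>0 (1 - e\<^sup>-\<^sup>a) \<cdot> \<Sum>\<^sub>\<nu> f(\<nu>) e\<^sup>\<nu>\<close>.\<close>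

definition denom_conv :: "nat \<Rightarrow> ((nat \<Rightarrow> int) \<Rightarrow> int) \<Rightarrow> (nat \<Rightarrow> int) \<Rightarrow> int" where
  "denom_conv n f mu = (\<Sum>S\<in>Pow (posroots n). (-1) ^ card S * f (\<lambda>k. mu k + vsum S k))"

definition rho_shift :: "nat \<Rightarrow> (nat \<Rightarrow> int) \<Rightarrow> nat \<Rightarrow> int" where
  "rho_shift n lam = (\<lambda>i. lam i + rho2 n i)"

text \<open>Kostant's multiplicity formula turns into Weyl's character formula.\<close>

lemma denom_conv_wmult:
  "denom_conv n (wmult n lam) mu =
     (\<Sum>w\<in>weylB n. wsgn w * (if (\<lambda>k. wact w (rho_shift n lam) k - rho2 n k) = mu then 1 else 0))"
proof -
  have "denom_conv n (wmult n lam) mu = (\<Sum>w\<in>weylB n. wsgn w * (\<Sum>S\<in>Pow (posroots n). (-1) ^ card S *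
      int (npartitions (posroots n) (\<lambda>k. (wact w (rho_shift n lam) k - (mu k + rho2 n k)) - vsum S k))))"
    unfolding denom_conv_def wmult_def kostant_eq_npartitions rho_shift_def
    by (simp add: sum_distrib_left algebra_simps) (rule sum.swap)
  also have "\<dots> = (\<Sum>w\<in>weylB n. wsgn w * (if (\<lambda>k. wact w (rho_shift n lam) k - rho2 n k) = mu then 1 else 0))"
  proof (intro sum.cong refl)
    fix w
    have "((\<lambda>k. wact w (rho_shift n lam) k - (mu k + rho2 n k)) = (\<lambda>_. 0)) \<longleftrightarrow>
          ((\<lambda>k. wact w (rho_shift n lam) k - rho2 n k) = mu)"
      by (auto simp: fun_eq_iff algebra_simps)
    thus "wsgn w * (\<Sum>S\<in>Pow (posroots n). (-1) ^ card S *
        int (npartitions (posroots n) (\<lambda>k. (wact w (rho_shift n lam) k - (mu k + rho2 n k)) - vsum S k))) =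
      wsgn w * (if (\<lambda>k. wact w (rho_shift n lam) k - rho2 n k) = mu then 1 else 0)"
      by (subst alternating_sum_npartitions[where n = n]) (auto simp: height_posroot_pos)
  qed
  finally show ?thesis .
qed

lemma denom_conv_diff: "denom_conv n (\<lambda>mu. f mu - g mu) mu = denom_conv n f mu - denom_conv n g mu"
  unfolding denom_conv_def by (simp add: sum_subtractf right_diff_distrib)

text \<open>The inverse of \<open>\<Prod>(1 - e\<^sup>-\<^sup>a)\<close> is unique among series supported in a half space \<open>height \<le> c\<close>:
  a nonzero term of maximal height would survive the multiplication.\<close>

lemma denom_conv_eq_0_imp_eq_0:
  assumes conv0: "\<And>mu. denom_conv n f mu = 0" and bound: "\<And>mu. f mu \<noteq> 0 \<Longrightarrow> height n mu \<le> c"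
  shows "f mu0 = 0"
proof (rule ccontr)
  assume "f mu0 \<noteq> 0"
  define P where "P mu \<longleftrightarrow> f mu \<noteq> 0 \<and> height n mu0 \<le> height n mu" for mu
  define g where "g mu = nat (height n mu - height n mu0)" for mu
  have "P mu0" using \<open>f mu0 \<noteq> 0\<close> by (simp add: P_def)
  moreover have "\<forall>mu. P mu \<longrightarrow> g mu < nat (c - height n mu0) + 1"
    using bound unfolding P_def g_def by (fastforce intro: le_imp_less_Suc nat_mono)
  ultimately obtain m where m: "P m" "\<And>mu. P mu \<Longrightarrow> g mu \<le> g m"
    using ex_has_greatest_nat[of P mu0 g] by blast
  have "f (\<lambda>k. m k + vsum S k) = 0" if S: "S \<in> Pow (posroots n) - {{}}" for S
  proof (rule ccontr)
    assume nz: "f (\<lambda>k. m k + vsum S k) \<noteq> 0"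
    have "(\<Sum>a\<in>S. height n a) > 0"
      using S finite_subset[of S "posroots n"] height_posroot_pos by (intro sum_pos) auto
    hence "height n (\<lambda>k. m k + vsum S k) > height n m" by (simp add: height_add height_vsum)
    thus False using m nz unfolding P_def g_def by fastforce
  qed
  hence "denom_conv n f m = f m"
    unfolding denom_conv_def by (subst sum.remove[of _ "{}"]) (auto simp: vsum_def)
  thus False using conv0 m(1) unfolding P_def by simp
qed

section \<open>Finite formal sums of exponentials\<close>

text \<open>A triple \<open>(X, c, wt)\<close> with \<open>X\<close> finite stands for the formal sum \<open>\<Sum>\<^sub>x\<^sub>\<in>\<^sub>X c(x) e\<^bsup>wt(x)\<^esup>\<close>;
  \<open>fcoeff\<close> is its coefficient of \<open>e\<^sup>\<mu>\<close> and \<open>feval\<close> its value at \<open>e\<^sup>\<mu> \<mapsto> \<Prod>\<^sub>i y\<^sub>i\<^bsup>\<mu>\<^sub>i\<^esup>\<close>.\<close>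

definition fcoeff :: "'x set \<Rightarrow> ('x \<Rightarrow> int) \<Rightarrow> ('x \<Rightarrow> nat \<Rightarrow> int) \<Rightarrow> (nat \<Rightarrow> int) \<Rightarrow> int" where
  "fcoeff X c wt mu = (\<Sum>x\<in>{x\<in>X. wt x = mu}. c x)"

definition monomial_at :: "nat \<Rightarrow> (nat \<Rightarrow> int) \<Rightarrow> (nat \<Rightarrow> real) \<Rightarrow> real" where
  "monomial_at n v y = (\<Prod>i=1..n. y i powi v i)"

definition feval :: "nat \<Rightarrow> 'x set \<Rightarrow> ('x \<Rightarrow> int) \<Rightarrow> ('x \<Rightarrow> nat \<Rightarrow> int) \<Rightarrow> (nat \<Rightarrow> real) \<Rightarrow> real" where
  "feval n X c wt y = (\<Sum>x\<in>X. of_int (c x) * monomial_at n (wt x) y)"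

definition positive_on :: "nat \<Rightarrow> (nat \<Rightarrow> real) \<Rightarrow> bool" where
  "positive_on n y \<longleftrightarrow> (\<forall>i\<in>{1..n}. y i > 0)"

lemma fcoeff_if: "finite X \<Longrightarrow> fcoeff X c wt mu = (\<Sum>x\<in>X. if wt x = mu then c x else 0)"
  unfolding fcoeff_def by (rule sum.inter_filter)

lemma fcoeff_nonzero_imp_weight:
  assumes "fcoeff X c wt mu \<noteq> 0"
  obtains x where "x \<in> X" "wt x = mu"
  using assms unfolding fcoeff_def by (metis (mono_tags, lifting) empty_Collect_eq sum.empty)

lemma denom_conv_fcoeff:
  assumes fin: "finite X"
  shows "denom_conv n (fcoeff X c wt) mu =
    fcoeff (X \<times> Pow (posroots n)) (\<lambda>(x, S). (-1) ^ card S * c x) (\<lambda>(x, S) k. wt x k - vsum S k) mu"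
proof -
  have e: "(wt x = (\<lambda>k. mu k + vsum S k)) \<longleftrightarrow> ((\<lambda>k. wt x k - vsum S k) = mu)" for x S
    by (auto simp: fun_eq_iff algebra_simps)
  have "denom_conv n (fcoeff X c wt) mu = (\<Sum>S\<in>Pow (posroots n). \<Sum>x\<in>X.
      if (\<lambda>k. wt x k - vsum S k) = mu then (-1) ^ card S * c x else 0)"
    unfolding denom_conv_def fcoeff_if[OF fin] e by (simp add: sum_distrib_left if_distrib cong: if_cong)
  also have "\<dots> = (\<Sum>x\<in>X. \<Sum>S\<in>Pow (posroots n).
      if (\<lambda>k. wt x k - vsum S k) = mu then (-1) ^ card S * c x else 0)"
    by (rule sum.swap)
  also have "\<dots> = fcoeff (X \<times> Pow (posroots n)) (\<lambda>(x, S). (-1) ^ card S * c x) (\<lambda>(x, S) k. wt x k - vsum S k) mu"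
    using fin by (simp add: fcoeff_if sum.cartesian_product' cong: if_cong)
  finally show ?thesis .
qed

lemma weylB_eq: "weylB n = {\<sigma>. \<sigma> permutes {1..n}} \<times> Pow {1..n}"
  unfolding weylB_def by auto

lemma finite_weylB [simp]: "finite (weylB n)"
  unfolding weylB_eq by (simp add: finite_permutations)

lemma denom_conv_wmult_fcoeff:
  "denom_conv n (wmult n lam) = fcoeff (weylB n) wsgn (\<lambda>w k. wact w (rho_shift n lam) k - rho2 n k)"
  by (rule ext, subst denom_conv_wmult, subst fcoeff_if) (auto simp: if_distrib cong: if_cong)

lemma monomial_at_zero [simp]: "monomial_at n (\<lambda>_. 0) y = 1"
  unfolding monomial_at_def by simp

lemma monomial_at_add:
  assumes "positive_on n y"
  shows "monomial_at n (\<lambda>k. u k + v k) y = monomial_at n u y * monomial_at n v y"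
proof -
  have "y i powi (u i + v i) = y i powi u i * y i powi v i" if "i \<in> {1..n}" for i
  proof -
    have "y i \<noteq> 0" using assms that unfolding positive_on_def by fastforce
    thus ?thesis by (simp add: power_int_add)
  qed
  thus ?thesis unfolding monomial_at_def by (simp add: prod.distrib[symmetric])
qed

lemma monomial_at_uminus: "positive_on n y \<Longrightarrow> monomial_at n (\<lambda>k. - v k) y = 1 / monomial_at n v y"
  unfolding monomial_at_def positive_on_def
  by (simp add: power_int_minus prod_inversef[unfolded comp_def] divide_inverse)

lemma monomial_at_diff: "positive_on n y \<Longrightarrow> monomial_at n (\<lambda>k. u k - v k) y = monomial_at n u y / monomial_at n v y"
  using monomial_at_add[of n y u "\<lambda>k. - v k"] monomial_at_uminus[of n y v] by simp

lemma monomial_at_sum: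
  assumes "positive_on n y" "finite S"
  shows "monomial_at n (\<lambda>k. \<Sum>a\<in>S. f a k) y = (\<Prod>a\<in>S. monomial_at n (f a) y)"
  using assms(2) by (induction S rule: finite_induct) (simp_all add: monomial_at_add[OF assms(1)])

lemma monomial_at_eps2: "i \<in> {1..n} \<Longrightarrow> monomial_at n (eps2 i) y = y i ^ 2"
  unfolding monomial_at_def eps2_def by (simp add: if_distrib prod.delta cong: if_cong)

lemma feval_denom_conv:
  assumes fin: "finite X" and y: "positive_on n y"
  shows "feval n (X \<times> Pow (posroots n)) (\<lambda>(x, S). (-1) ^ card S * c x) (\<lambda>(x, S) k. wt x k - vsum S k) y
       = feval n X c wt y * (\<Prod>a\<in>posroots n. 1 - monomial_at n (\<lambda>k. - a k) y)"
proof -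
  have monomial_at_vsum: "monomial_at n (\<lambda>k. u k - vsum S k) y = monomial_at n u y * (\<Prod>a\<in>S. monomial_at n (\<lambda>k. - a k) y)"
    if "S \<subseteq> posroots n" for u S
  proof -
    have "finite S" using that by (auto intro: finite_subset[OF _ finite_posroots])
    have "monomial_at n (\<lambda>k. u k - vsum S k) y = monomial_at n (\<lambda>k. u k + (\<Sum>a\<in>S. - a k)) y"
      unfolding vsum_def by (simp add: sum_negf)
    thus ?thesis by (simp add: monomial_at_add[OF y] monomial_at_sum[OF y \<open>finite S\<close>])
  qed
  have "feval n (X \<times> Pow (posroots n)) (\<lambda>(x, S). (-1) ^ card S * c x) (\<lambda>(x, S) k. wt x k - vsum S k) y
      = (\<Sum>x\<in>X. of_int (c x) * monomial_at n (wt x) y *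
           (\<Sum>S\<in>Pow (posroots n). (-1) ^ card S * (\<Prod>a\<in>S. monomial_at n (\<lambda>k. - a k) y)))"
    unfolding feval_def sum.cartesian_product' sum_distrib_left
    by (intro sum.cong refl) (auto simp: monomial_at_vsum)
  also have "(\<Sum>S\<in>Pow (posroots n). (-1) ^ card S * (\<Prod>a\<in>S. monomial_at n (\<lambda>k. - a k) y))
      = (\<Prod>a\<in>posroots n. 1 - monomial_at n (\<lambda>k. - a k) y)"
    using prod_diff_conv_sum[of "posroots n" "\<lambda>_. 1" "\<lambda>a. monomial_at n (\<lambda>k. - a k) y"] by simp
  finally show ?thesis unfolding feval_def by (simp add: sum_distrib_right)
qed

text \<open>At \<open>y\<^sub>i = T\<^bsup>B\<^sup>i\<^esup>\<close> the monomial \<open>e\<^sup>\<mu>\<close> becomes \<open>T\<^sup>m\<close> where \<open>m\<close> has the base-\<open>B\<close> digits \<open>\<mu>\<^sub>i\<close>;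
  for \<open>B\<close> large compared to the weights this is injective, so the one-variable identity
  theorem for Laurent polynomials separates the weights.\<close>

definition spec_point :: "nat \<Rightarrow> real \<Rightarrow> nat \<Rightarrow> real" where
  "spec_point B T = (\<lambda>i. T ^ (B ^ i))"

definition digits_val :: "nat \<Rightarrow> nat \<Rightarrow> (nat \<Rightarrow> int) \<Rightarrow> int" where
  "digits_val n B v = (\<Sum>i=1..n. v i * int B ^ i)"

definition box :: "nat \<Rightarrow> int \<Rightarrow> (nat \<Rightarrow> int) set" where
  "box n C = {v. (\<forall>i. i \<notin> {1..n} \<longrightarrow> v i = 0) \<and> (\<forall>i. \<bar>v i\<bar> \<le> C)}"

lemma prod_powi: "(T::real) \<noteq> 0 \<Longrightarrow> (\<Prod>i\<in>A. T powi f i) = T powi (\<Sum>i\<in>A. f i)"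
  by (induction A rule: infinite_finite_induct) (auto simp: power_int_add)

lemma monomial_at_powers:
  assumes "(T::real) > 0"
  shows "monomial_at n v (\<lambda>i. T ^ e i) = T powi (\<Sum>i=1..n. int (e i) * v i)"
proof -
  have "(T ^ e i) powi v i = T powi (int (e i) * v i)" for i
    by (metis power_int_mult power_int_of_nat)
  thus ?thesis unfolding monomial_at_def using assms by (simp add: prod_powi)
qed

lemma monomial_at_spec_point: "(T::real) > 0 \<Longrightarrow> monomial_at n v (spec_point B T) = T powi digits_val n B v"
  unfolding spec_point_def digits_val_def by (simp add: monomial_at_powers mult.commute)

lemma base_digits_eq_0:
  fixes d :: "nat \<Rightarrow> int"
  assumes "\<forall>i\<in>{1..n}. \<bar>d i\<bar> < int B" "(\<Sum>i=1..n. d i * int B ^ i) = 0"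
  shows "\<forall>i\<in>{1..n}. d i = 0"
  using assms
proof (induction n)
  case (Suc n)
  have B: "int B \<ge> 1" using Suc.prems(1) by fastforce
  have "\<bar>\<Sum>i=1..n. d i * int B ^ i\<bar> \<le> (\<Sum>i=1..n. (int B - 1) * int B ^ i)"
  proof (rule order.trans[OF sum_abs sum_mono])
    fix i assume "i \<in> {1..n}"
    hence "\<bar>d i\<bar> \<le> int B - 1" using Suc.prems(1) by fastforce
    thus "\<bar>d i * int B ^ i\<bar> \<le> (int B - 1) * int B ^ i"
      by (simp add: abs_mult mult_right_mono)
  qed
  also have "\<dots> = int B ^ Suc n - int B"
    by (induction n) (auto simp: algebra_simps)
  finally have lower_bound: "\<bar>\<Sum>i=1..n. d i * int B ^ i\<bar> < int B ^ Suc n"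
    using B by linarith
  have split: "(\<Sum>i=1..n. d i * int B ^ i) + d (Suc n) * int B ^ Suc n = 0"
    using Suc.prems(2) by simp
  have "d (Suc n) = 0"
  proof (rule ccontr)
    assume "d (Suc n) \<noteq> 0"
    hence "\<bar>d (Suc n) * int B ^ Suc n\<bar> \<ge> int B ^ Suc n"
      using B by (simp add: abs_mult)
    thus False using split lower_bound by linarith
  qed
  moreover have "\<forall>i\<in>{1..n}. d i = 0"
    using Suc.IH Suc.prems(1) split \<open>d (Suc n) = 0\<close> by simp
  ultimately show ?case by (auto simp: le_Suc_eq)
qed simp

lemma digits_val_inj:
  assumes "u \<in> box n C" "v \<in> box n C" "2 * C < int B" "digits_val n B u = digits_val n B v"
  shows "u = v"
proof -
  have "(\<Sum>i=1..n. (u i - v i) * int B ^ i) = 0"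
    using assms(4) unfolding digits_val_def by (simp add: left_diff_distrib sum_subtractf)
  moreover have "\<forall>i\<in>{1..n}. \<bar>u i - v i\<bar> < int B"
    using assms(1-3) unfolding box_def by (smt (verit, best) mem_Collect_eq)
  ultimately have "\<forall>i\<in>{1..n}. u i - v i = 0" by (intro base_digits_eq_0) auto
  thus ?thesis using assms(1,2) unfolding box_def by (auto simp: fun_eq_iff)
qed

lemma feval_spec_point:
  assumes "finite X" "T > 0"
  shows "feval n X c wt (spec_point B T) =
    (\<Sum>e\<in>digits_val n B ` wt ` X. of_int (\<Sum>x | x \<in> X \<and> digits_val n B (wt x) = e. c x) * T powi e)"
proof -
  have "feval n X c wt (spec_point B T) = (\<Sum>x\<in>X. of_int (c x) * T powi digits_val n B (wt x))"
    unfolding feval_def using monomial_at_spec_point[OF assms(2)] by simp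
  also have "\<dots> = (\<Sum>e\<in>(\<lambda>x. digits_val n B (wt x)) ` X.
      \<Sum>x | x \<in> X \<and> digits_val n B (wt x) = e. of_int (c x) * T powi digits_val n B (wt x))"
    by (rule sum.image_gen[OF assms(1)])
  finally show ?thesis by (simp add: image_image sum_distrib_right)
qed

lemma fcoeff_unique:
  assumes fX: "finite X" and fY: "finite Y"
    and bX: "\<forall>x\<in>X. wt x \<in> box n C" and bY: "\<forall>y\<in>Y. wt' y \<in> box n C"
    and B: "2 * C < int B"
    and eq: "\<And>T. T > 1 \<Longrightarrow> feval n X c wt (spec_point B T) = feval n Y d wt' (spec_point B T)"
  shows "fcoeff X c wt = fcoeff Y d wt'"
proof
  fix mu
  define a where "a e = (\<Sum>x | x \<in> X \<and> digits_val n B (wt x) = e. c x)" for e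
  define b where "b e = (\<Sum>x | x \<in> Y \<and> digits_val n B (wt' x) = e. d x)" for e
  have "a e = b e" for e
  proof -
    have "(if e \<in> digits_val n B ` wt ` X then real_of_int (a e) else 0) =
          (if e \<in> digits_val n B ` wt' ` Y then real_of_int (b e) else 0)"
      by (rule laurent_coeffs_unique)
        (use fX fY eq feval_spec_point[OF fX] feval_spec_point[OF fY] in \<open>auto simp: a_def b_def\<close>)
    moreover have "e \<notin> digits_val n B ` wt ` X \<Longrightarrow> a e = 0" "e \<notin> digits_val n B ` wt' ` Y \<Longrightarrow> b e = 0"
      unfolding a_def b_def by (auto intro!: sum.neutral)
    ultimately show ?thesis by (auto split: if_splits)
  qed
  show "fcoeff X c wt mu = fcoeff Y d wt' mu"
  proof (cases "mu \<in> box n C")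
    case True
    have "{x\<in>X. wt x = mu} = {x\<in>X. digits_val n B (wt x) = digits_val n B mu}"
         "{x\<in>Y. wt' x = mu} = {x\<in>Y. digits_val n B (wt' x) = digits_val n B mu}"
      using digits_val_inj[OF _ True B] bX bY by auto
    thus ?thesis using \<open>a (digits_val n B mu) = b (digits_val n B mu)\<close>
      unfolding fcoeff_def a_def b_def by simp
  next
    case False
    hence "{x\<in>X. wt x = mu} = {}" "{x\<in>Y. wt' x = mu} = {}" using bX bY by auto
    thus ?thesis unfolding fcoeff_def by (simp only: sum.empty)
  qed
qed

lemma bounded_weights_in_box:
  assumes "finite X" "\<And>x k. x \<in> X \<Longrightarrow> k \<notin> {1..n} \<Longrightarrow> wt x k = 0"
  shows "\<forall>x\<in>X. wt x \<in> box n (\<Sum>x\<in>X. \<Sum>k=1..n. \<bar>wt x k\<bar>)"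
proof (intro ballI)
  fix x assume "x \<in> X"
  have "\<bar>wt x k\<bar> \<le> (\<Sum>x\<in>X. \<Sum>k=1..n. \<bar>wt x k\<bar>)" for k
  proof (cases "k \<in> {1..n}")
    case True
    have "\<bar>wt x k\<bar> \<le> (\<Sum>k=1..n. \<bar>wt x k\<bar>)"
      using True by (intro member_le_sum) auto
    also have "\<dots> \<le> (\<Sum>x\<in>X. \<Sum>k=1..n. \<bar>wt x k\<bar>)"
      using assms(1) \<open>x \<in> X\<close> by (intro member_le_sum) (auto intro: sum_nonneg)
    finally show ?thesis .
  next
    case False
    thus ?thesis using assms \<open>x \<in> X\<close> by (auto intro!: sum_nonneg)
  qed
  thus "wt x \<in> box n (\<Sum>x\<in>X. \<Sum>k=1..n. \<bar>wt x k\<bar>)"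
    unfolding box_def using assms(2) \<open>x \<in> X\<close> by auto
qed

lemma box_mono: "C \<le> D \<Longrightarrow> v \<in> box n C \<Longrightarrow> v \<in> box n D"
  unfolding box_def using order_trans by blast

section \<open>The character of \<open>V(\<omega>\<^sub>n + \<omega>\<^sub>s)\<close>\<close>

lemma permutes_shift_down:
  assumes "\<sigma> permutes {1..(n::nat)}"
  shows "(\<lambda>x. if x \<in> {0..<n} then \<sigma> (Suc x) - 1 else x) permutes {0..<n}"
    and "sign (\<lambda>x. if x \<in> {0..<n} then \<sigma> (Suc x) - 1 else x) = sign \<sigma>"
proof -
  interpret permutes_bij_finite \<sigma> "{1..n}" "{0..<n}" "\<lambda>x. x - 1" Suc
    "\<lambda>x. if x \<in> {0..<n} then \<sigma> (Suc x) - 1 else x"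
    by unfold_locales (use assms in \<open>auto intro!: bij_betw_byWitness[of _ Suc]\<close>)
  show "(\<lambda>x. if x \<in> {0..<n} then \<sigma> (Suc x) - 1 else x) permutes {0..<n}"
       "sign (\<lambda>x. if x \<in> {0..<n} then \<sigma> (Suc x) - 1 else x) = sign \<sigma>"
    using permutes_p' sign_p' by simp_all
qed

lemma permutes_shift_up:
  assumes "p permutes {0..<(n::nat)}"
  shows "(\<lambda>x. if x \<in> {1..n} then Suc (p (x - 1)) else x) permutes {1..n}"
proof -
  interpret permutes_bij_finite p "{0..<n}" "{1..n}" Suc "\<lambda>x. x - 1"
    "\<lambda>x. if x \<in> {1..n} then Suc (p (x - 1)) else x"
    by unfold_locales (use assms in \<open>auto intro!: bij_betw_byWitness[of _ "\<lambda>x. x - 1"]\<close>)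
  show ?thesis using permutes_p' by simp
qed

lemma bij_betw_permutes_shift:
  "bij_betw (\<lambda>\<sigma> x. if x \<in> {0..<n} then \<sigma> (Suc x) - 1 else x)
     {\<sigma>. \<sigma> permutes {1..n}} {p. p permutes {0..<(n::nat)}}"
proof (rule bij_betw_byWitness[where f' = "\<lambda>p x. if x \<in> {1..n} then Suc (p (x - 1)) else x"])
  show "\<forall>\<sigma>\<in>{\<sigma>. \<sigma> permutes {1..n}}. (\<lambda>x. if x \<in> {1..n} then Suc ((if x - 1 \<in> {0..<n} then \<sigma> (Suc (x - 1)) - 1 else x - 1)) else x) = \<sigma>"
  proof (intro ballI ext)
    fix \<sigma> x assume "\<sigma> \<in> {\<sigma>. \<sigma> permutes {1..n}}"
    hence "\<sigma> permutes {1..n}" by simp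
    thus "(if x \<in> {1..n} then Suc ((if x - 1 \<in> {0..<n} then \<sigma> (Suc (x - 1)) - 1 else x - 1)) else x) = \<sigma> x"
      using permutes_in_image[of \<sigma> "{1..n}" x] permutes_not_in[of \<sigma> "{1..n}" x] by (cases "x \<in> {1..n}") auto
  qed
  show "\<forall>p\<in>{p. p permutes {0..<n}}. (\<lambda>x. if x \<in> {0..<n} then (if Suc x \<in> {1..n} then Suc (p (Suc x - 1)) else Suc x) - 1 else x) = p"
  proof (intro ballI ext)
    fix p x assume "p \<in> {p. p permutes {0..<n}}"
    hence "p permutes {0..<n}" by simp
    thus "(if x \<in> {0..<n} then (if Suc x \<in> {1..n} then Suc (p (Suc x - 1)) else Suc x) - 1 else x) = p x"
      using permutes_in_image[of p "{0..<n}" x] permutes_not_in[of p "{0..<n}" x] by (cases "x \<in> {0..<n}") auto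
  qed
qed (use permutes_shift_down(1) permutes_shift_up in auto)

lemma det_leibniz_shift:
  fixes f :: "nat \<Rightarrow> nat \<Rightarrow> real"
  shows "det (mat n n (\<lambda>(i, j). f (Suc i) (Suc j))) =
         (\<Sum>\<sigma> | \<sigma> permutes {1..n}. of_int (sign \<sigma>) * (\<Prod>i=1..n. f i (\<sigma> i)))"
proof -
  define down where "down = (\<lambda>\<sigma> x. if x \<in> {0..<n} then \<sigma> (Suc x) - 1 else (x::nat))"
  have "det (mat n n (\<lambda>(i, j). f (Suc i) (Suc j))) =
     (\<Sum>p | p permutes {0..<n}. signof p * (\<Prod>i=0..<n. f (Suc i) (Suc (p i))))"
    by (subst det_def'[of _ n]) auto
  also have "\<dots> = (\<Sum>\<sigma> | \<sigma> permutes {1..n}. signof (down \<sigma>) * (\<Prod>i=0..<n. f (Suc i) (Suc (down \<sigma> i))))"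
    using sum.reindex_bij_betw[OF bij_betw_permutes_shift[of n], of "\<lambda>p. signof p * (\<Prod>i=0..<n. f (Suc i) (Suc (p i)))"]
    unfolding down_def by simp
  also have "\<dots> = (\<Sum>\<sigma> | \<sigma> permutes {1..n}. of_int (sign \<sigma>) * (\<Prod>i=1..n. f i (\<sigma> i)))"
  proof (intro sum.cong refl)
    fix \<sigma> assume "\<sigma> \<in> {\<sigma>. \<sigma> permutes {1..n}}"
    hence \<sigma>: "\<sigma> permutes {1..n}" by simp
    have "(\<Prod>i=0..<n. f (Suc i) (Suc (down \<sigma> i))) = (\<Prod>i=0..<n. f (Suc i) (\<sigma> (Suc i)))"
    proof (intro prod.cong refl)
      fix i assume "i \<in> {0..<n}"
      moreover have "\<sigma> (Suc i) \<in> {1..n}" using permutes_in_image[OF \<sigma>, of "Suc i"] \<open>i \<in> {0..<n}\<close> by auto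
      ultimately show "f (Suc i) (Suc (down \<sigma> i)) = f (Suc i) (\<sigma> (Suc i))" unfolding down_def by auto
    qed
    also have "\<dots> = (\<Prod>i=1..n. f i (\<sigma> i))"
      using prod.shift_bounds_Suc_ivl[of "\<lambda>i. f i (\<sigma> i)" 0 n] by (simp add: atLeastLessThanSuc_atLeastAtMost)
    finally show "signof (down \<sigma>) * (\<Prod>i=0..<n. f (Suc i) (Suc (down \<sigma> i))) =
        of_int (sign \<sigma>) * (\<Prod>i=1..n. f i (\<sigma> i))"
      using permutes_shift_down(2)[OF \<sigma>] unfolding down_def by simp
  qed
  finally show ?thesis .
qed

lemma prod_if_split:
  assumes "finite A" "F \<subseteq> A"
  shows "(\<Prod>i\<in>A. if i \<in> F then b i else a i) = prod b F * prod a (A - F)"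
  using prod.If_cases[OF assms(1), of "\<lambda>i. i \<in> F" b a] assms(2)
  by (simp add: Int_absorb1 Diff_eq Collect_mem_eq)

lemma prod_antipow_eq_sum:
  fixes n :: nat
  shows "(\<Prod>i=1..n. antipow (e i) (x i)) =
    (\<Sum>F\<in>Pow {1..n}. (-1) ^ card F * (\<Prod>i=1..n. if i \<in> F then (1 / x i) ^ e i else x i ^ e i))"
proof -
  have "(\<Prod>i=1..n. antipow (e i) (x i)) =
      (\<Sum>F\<in>Pow {1..n}. (-1) ^ card F * (\<Prod>i\<in>F. (1 / x i) ^ e i) * (\<Prod>i\<in>{1..n} - F. x i ^ e i))"
    unfolding antipow_def by (rule prod_diff_conv_sum) simp
  thus ?thesis by (simp add: prod_if_split mult.assoc)
qed

definition lam_rho_exp :: "nat \<Rightarrow> nat \<Rightarrow> nat \<Rightarrow> nat" where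
  "lam_rho_exp n s k = n - k + 1 + (if k \<le> s then 1 else 0)"

abbreviation lamB :: "nat \<Rightarrow> nat \<Rightarrow> nat \<Rightarrow> int" where
  "lamB n s \<equiv> (\<lambda>j. omega2 n n j + omegat2 n s j)"

lemma rho_shift_lamB:
  assumes "s \<le> n" "k \<in> {1..n}"
  shows "rho_shift n (lamB n s) k = 2 * int (lam_rho_exp n s k)"
proof -
  have "omegat2 n s k = (if k \<le> s then 2 else 0)"
    using assms unfolding omegat2_def omega2_def by auto
  thus ?thesis
    using assms unfolding rho_shift_def lam_rho_exp_def by (simp add: omega2_def rho2_def of_nat_diff)
qed

lemma rho_shift_lamB_outside: "k \<notin> {1..n} \<Longrightarrow> rho_shift n (lamB n s) k = 0"
  unfolding rho_shift_def omegat2_def omega2_def rho2_def by auto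

lemma monomial_at_wact:
  assumes "s \<le> n" and y: "positive_on n y" and \<sigma>: "\<sigma> permutes {1..n}"
  shows "monomial_at n (wact (\<sigma>, F) (rho_shift n (lamB n s))) y =
    (\<Prod>i=1..n. if i \<in> F then (1 / y i ^ 2) ^ lam_rho_exp n s (\<sigma> i) else (y i ^ 2) ^ lam_rho_exp n s (\<sigma> i))"
  unfolding monomial_at_def wact_def
proof (intro prod.cong refl)
  fix i assume i: "i \<in> {1..n}"
  hence "\<sigma> i \<in> {1..n}" using permutes_in_image[OF \<sigma>] by auto
  hence "y i powi ((if i \<in> F then -1 else 1) * rho_shift n (lamB n s) (\<sigma> i))
      = y i powi ((if i \<in> F then -1 else 1) * (2 * int (lam_rho_exp n s (\<sigma> i))))"
    using rho_shift_lamB[OF \<open>s \<le> n\<close>] by simp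
  also have "\<dots> = (if i \<in> F then (1 / y i ^ 2) ^ lam_rho_exp n s (\<sigma> i) else (y i ^ 2) ^ lam_rho_exp n s (\<sigma> i))"
    by (simp add: power_int_minus power_int_mult power_mult power_one_over divide_inverse power_inverse)
  finally show "y i powi ((if i \<in> snd (\<sigma>, F) then -1 else 1) * rho_shift n (lamB n s) (fst (\<sigma>, F) i)) =
      (if i \<in> F then (1 / y i ^ 2) ^ lam_rho_exp n s (\<sigma> i) else (y i ^ 2) ^ lam_rho_exp n s (\<sigma> i))"
    by simp
qed

lemma feval_weyl_numerator:
  assumes "s \<le> n" and y: "positive_on n y"
  shows "feval n (weylB n) wsgn (\<lambda>w k. wact w (rho_shift n (lamB n s)) k - rho2 n k) y
       = minor_det n (\<lambda>i. y i ^ 2) s / monomial_at n (rho2 n) y"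
proof -
  define x where "x = (\<lambda>i. y i ^ 2)"
  have "(\<Sum>w\<in>weylB n. of_int (wsgn w) * monomial_at n (wact w (rho_shift n (lamB n s))) y)
     = (\<Sum>\<sigma> | \<sigma> permutes {1..n}. \<Sum>F\<in>Pow {1..n}. of_int (sign \<sigma>) * ((-1) ^ card F *
          (\<Prod>i=1..n. if i \<in> F then (1 / x i) ^ lam_rho_exp n s (\<sigma> i) else x i ^ lam_rho_exp n s (\<sigma> i))))"
    unfolding weylB_eq sum.cartesian_product' x_def
    by (intro sum.cong refl) (simp add: monomial_at_wact[OF assms] wsgn_def)
  also have "\<dots> = (\<Sum>\<sigma> | \<sigma> permutes {1..n}. of_int (sign \<sigma>) * (\<Prod>i=1..n. antipow (lam_rho_exp n s (\<sigma> i)) (x i)))"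
    by (simp only: prod_antipow_eq_sum sum_distrib_left)
  also have "\<dots> = det (mat n n (\<lambda>(i, j). antipow (lam_rho_exp n s (Suc j)) (x (Suc i))))"
    by (rule det_leibniz_shift[where f = "\<lambda>i j. antipow (lam_rho_exp n s j) (x i)", symmetric])
  also have "mat n n (\<lambda>(i, j). antipow (lam_rho_exp n s (Suc j)) (x (Suc i))) = antipow_mat n (exps_without n s) x"
    unfolding antipow_mat_def lam_rho_exp_def exps_without_def by (rule eq_matI) (auto simp: Suc_diff_Suc Suc_diff_le)
  finally show ?thesis
    unfolding feval_def monomial_at_diff[OF y] minor_det_def x_def by (simp add: sum_divide_distrib[symmetric])
qed

lemma monomial_at_neg_root_diff:
  assumes y: "positive_on n y" and "i \<in> {1..n}" "j \<in> {1..n}"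
  shows "monomial_at n (\<lambda>k. - root_diff i j k) y = y j ^ 2 / y i ^ 2"
  using assms unfolding root_diff_def monomial_at_uminus[OF y] monomial_at_diff[OF y] by (simp add: monomial_at_eps2)

lemma monomial_at_neg_root_sum:
  assumes y: "positive_on n y" and "i \<in> {1..n}" "j \<in> {1..n}"
  shows "monomial_at n (\<lambda>k. - root_sum i j k) y = 1 / (y i ^ 2 * y j ^ 2)"
  using assms unfolding root_sum_def monomial_at_uminus[OF y] monomial_at_add[OF y] by (simp add: monomial_at_eps2)

lemma prod_one_minus_posroots:
  assumes y: "positive_on n y"
  defines "x \<equiv> \<lambda>i. y i ^ 2"
  shows "(\<Prod>a\<in>posroots n. 1 - monomial_at n (\<lambda>k. - a k) y) =
    (\<Prod>i=1..n. 1 - 1 / x i) * (\<Prod>i=1..n. \<Prod>j=Suc i..n. (1 - x j / x i) * (1 - 1 / (x i * x j)))"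
proof -
  have "(\<Prod>(i, j)\<in>lt_pairs n. (1 - monomial_at n (\<lambda>k. - root_diff i j k) y) * (1 - monomial_at n (\<lambda>k. - root_sum i j k) y))
      = (\<Prod>(i, j)\<in>lt_pairs n. (1 - x j / x i) * (1 - 1 / (x i * x j)))"
    by (intro prod.cong refl)
      (auto simp: lt_pairs_def x_def monomial_at_neg_root_diff[OF y] monomial_at_neg_root_sum[OF y])
  also have "\<dots> = (\<Prod>i=1..n. \<Prod>j=Suc i..n. (1 - x j / x i) * (1 - 1 / (x i * x j)))"
    unfolding lt_pairs_Sigma by (simp add: prod.Sigma)
  moreover have "(\<Prod>i=1..n. 1 - monomial_at n (\<lambda>k. - eps2 i k) y) = (\<Prod>i=1..n. 1 - 1 / x i)"
    by (intro prod.cong refl) (simp add: x_def monomial_at_uminus[OF y] monomial_at_eps2)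
  ultimately show ?thesis
    unfolding prod_posroots[where h = "\<lambda>a. 1 - monomial_at n (\<lambda>k. - a k) y"] by (simp add: mult.commute)
qed

lemma monomial_at_rho2:
  assumes "positive_on n y"
  shows "monomial_at n (rho2 n) y = (\<Prod>i=1..n. y i) * (\<Prod>i=1..n. \<Prod>j=Suc i..n. y i ^ 2)"
proof -
  have "y i powi rho2 n i = y i * (\<Prod>j=Suc i..n. y i ^ 2)" if "i \<in> {1..n}" for i
  proof -
    have "rho2 n i = int (Suc (2 * (n - i)))" using that unfolding rho2_def by (auto simp: of_nat_diff)
    hence "y i powi rho2 n i = y i ^ Suc (2 * (n - i))" by (simp only: power_int_of_nat)
    thus ?thesis by (simp add: power_mult)
  qed
  thus ?thesis unfolding monomial_at_def by (simp add: prod.distrib[symmetric])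
qed

lemma weyl_denominator_eval:
  assumes y: "positive_on n y"
  defines "x \<equiv> \<lambda>i. y i ^ 2"
  shows "monomial_at n (rho2 n) y * (\<Prod>a\<in>posroots n. 1 - monomial_at n (\<lambda>k. - a k) y)
       = (\<Prod>i=1..n. y i - 1 / y i) * (\<Prod>i=1..n. \<Prod>j=Suc i..n. recip_sum x i - recip_sum x j)"
proof -
  have y_pos: "y i > 0" if "i \<in> {1..n}" for i using y that unfolding positive_on_def by auto
  have "monomial_at n (rho2 n) y * (\<Prod>a\<in>posroots n. 1 - monomial_at n (\<lambda>k. - a k) y)
      = ((\<Prod>i=1..n. y i) * (\<Prod>i=1..n. 1 - 1 / x i)) *
        ((\<Prod>i=1..n. \<Prod>j=Suc i..n. y i ^ 2) * (\<Prod>i=1..n. \<Prod>j=Suc i..n. (1 - x j / x i) * (1 - 1 / (x i * x j))))"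
    unfolding monomial_at_rho2[OF y] prod_one_minus_posroots[OF y] x_def by (simp only: mult_ac)
  also have "(\<Prod>i=1..n. y i) * (\<Prod>i=1..n. 1 - 1 / x i) = (\<Prod>i=1..n. y i - 1 / y i)"
    unfolding prod.distrib[symmetric]
    by (intro prod.cong refl) (use y_pos in \<open>auto simp: x_def field_simps power2_eq_square\<close>)
  also have "(\<Prod>i=1..n. \<Prod>j=Suc i..n. y i ^ 2) * (\<Prod>i=1..n. \<Prod>j=Suc i..n. (1 - x j / x i) * (1 - 1 / (x i * x j)))
      = (\<Prod>i=1..n. \<Prod>j=Suc i..n. recip_sum x i - recip_sum x j)"
    unfolding prod.distrib[symmetric]
  proof (intro prod.cong refl)
    fix i j assume "i \<in> {1..n}" "j \<in> {Suc i..n}"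
    hence "x i > 0" "x j > 0" unfolding x_def using y_pos[of i] y_pos[of j] by auto
    moreover have "y i ^ 2 = x i" unfolding x_def ..
    ultimately show "y i ^ 2 * ((1 - x j / x i) * (1 - 1 / (x i * x j))) = recip_sum x i - recip_sum x j"
      unfolding recip_sum_def by (simp add: field_simps)
  qed
  finally show ?thesis .
qed

text \<open>The character \<open>K = (\<Prod>\<^sub>i (x\<^sub>i\<^bsup>1/2\<^esup> + x\<^sub>i\<^bsup>-1/2\<^esup>)) \<cdot> (e\<^sub>s - e\<^sub>s\<^sub>-\<^sub>2)\<close>, with \<open>e\<^sub>k\<close> elementary symmetric in the
  \<open>2n\<close> weights \<open>\<plusminus>\<epsilon>\<^sub>i\<close>: a term is a pair \<open>(F, B)\<close> where \<open>F\<close> lists the coordinates with exponent \<open>-1/2\<close>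
  in the first factor and \<open>B \<subseteq> signed_vars n\<close> selects the weights \<open>\<plusminus>\<epsilon>\<^sub>i\<close>.\<close>

definition K_terms :: "nat \<Rightarrow> nat \<Rightarrow> (nat set \<times> (nat \<times> bool) set) set" where
  "K_terms n s = Pow {1..n} \<times> {B. B \<subseteq> signed_vars n \<and> (card B = s \<or> (2 \<le> s \<and> card B = s - 2))}"

definition K_sign :: "nat \<Rightarrow> nat set \<times> (nat \<times> bool) set \<Rightarrow> int" where
  "K_sign s p = (if card (snd p) = s then 1 else -1)"

definition K_weight :: "nat \<Rightarrow> nat set \<times> (nat \<times> bool) set \<Rightarrow> nat \<Rightarrow> int" where
  "K_weight n p = (\<lambda>i. if i \<in> {1..n} then (if i \<in> fst p then -1 else 1)
      + 2 * (of_bool ((i, True) \<in> snd p) - of_bool ((i, False) \<in> snd p)) else 0)"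

lemma finite_K_terms [simp]: "finite (K_terms n s)"
  unfolding K_terms_def by (auto intro: finite_subset[of _ "Pow (signed_vars n)"])

lemma prod_signed_val:
  assumes "B \<subseteq> signed_vars n"
  shows "(\<Prod>b\<in>B. signed_val x b) =
    (\<Prod>i=1..n. (if (i, True) \<in> B then x i else 1) * (if (i, False) \<in> B then 1 / x i else 1))"
proof -
  have "(\<Prod>b\<in>B. signed_val x b) = (\<Prod>b\<in>signed_vars n. if b \<in> B then signed_val x b else 1)"
    using assms by (simp add: prod.inter_restrict[symmetric] Int_absorb1)
  also have "\<dots> = (\<Prod>i=1..n. \<Prod>\<beta>\<in>UNIV. if (i, \<beta>) \<in> B then signed_val x (i, \<beta>) else 1)"
    unfolding signed_vars_def by (rule prod.cartesian_product')
  also have "\<dots> = (\<Prod>i=1..n. (if (i, True) \<in> B then x i else 1) * (if (i, False) \<in> B then 1 / x i else 1))"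
    by (intro prod.cong refl) (simp add: UNIV_bool signed_val_def mult.commute)
  finally show ?thesis .
qed

lemma monomial_at_K_weight:
  assumes y: "positive_on n y" and "B \<subseteq> signed_vars n"
  shows "monomial_at n (K_weight n (F, B)) y =
    (\<Prod>i=1..n. if i \<in> F then 1 / y i else y i) * (\<Prod>b\<in>B. signed_val (\<lambda>i. y i ^ 2) b)"
proof -
  have "y i powi K_weight n (F, B) i = (if i \<in> F then 1 / y i else y i) *
       ((if (i, True) \<in> B then y i ^ 2 else 1) * (if (i, False) \<in> B then 1 / y i ^ 2 else 1))"
    if "i \<in> {1..n}" for i
  proof -
    have "y i > 0" using y that unfolding positive_on_def by auto
    thus ?thesis using that unfolding K_weight_def
      by (cases "i \<in> F"; cases "(i, True) \<in> B"; cases "(i, False) \<in> B")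
        (simp_all add: power_int_def field_simps power2_eq_square power3_eq_cube power_inverse)
  qed
  thus ?thesis
    unfolding monomial_at_def prod_signed_val[OF assms(2)] by (simp add: prod.distrib[symmetric])
qed

lemma sum_pow_eq_prod:
  fixes n :: nat and y :: "nat \<Rightarrow> real"
  shows "(\<Sum>F\<in>Pow {1..n}. \<Prod>i=1..n. if i \<in> F then 1 / y i else y i) = (\<Prod>i=1..n. y i + 1 / y i)"
proof -
  have "(\<Prod>i=1..n. 1 / y i + y i) = (\<Sum>F\<in>Pow {1..n}. (\<Prod>i\<in>F. 1 / y i) * (\<Prod>i\<in>{1..n} - F. y i))"
    by (rule prod_add) simp
  thus ?thesis by (simp add: prod_if_split add.commute)
qed

lemma sum_K_sign:
  "(\<Sum>B | B \<subseteq> signed_vars n \<and> (card B = s \<or> (2 \<le> s \<and> card B = s - 2)). of_int (K_sign s (F, B)) * (\<Prod>b\<in>B. signed_val x b))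
   = esym n x s - (if 2 \<le> s then esym n x (s - 2) else 0)"
proof (cases "2 \<le> s")
  case True
  have fin: "finite {B. B \<subseteq> signed_vars n \<and> card B = k}" for k
    by (rule finite_subset[of _ "Pow (signed_vars n)"]) auto
  have "{B. B \<subseteq> signed_vars n \<and> (card B = s \<or> (2 \<le> s \<and> card B = s - 2))}
      = {B. B \<subseteq> signed_vars n \<and> card B = s} \<union> {B. B \<subseteq> signed_vars n \<and> card B = s - 2}"
    using True by auto
  moreover have "{B. B \<subseteq> signed_vars n \<and> card B = s} \<inter> {B. B \<subseteq> signed_vars n \<and> card B = s - 2} = {}"
    using True by auto
  ultimately show ?thesis
    using True by (simp add: sum.union_disjoint[OF fin fin] esym_eq_sum K_sign_def sum_negf)
next
  case False
  thus ?thesis by (simp add: esym_eq_sum K_sign_def)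
qed

lemma feval_K:
  assumes y: "positive_on n y"
  shows "feval n (K_terms n s) (K_sign s) (K_weight n) y = (\<Prod>i=1..n. y i + 1 / y i) *
      (esym n (\<lambda>i. y i ^ 2) s - (if 2 \<le> s then esym n (\<lambda>i. y i ^ 2) (s - 2) else 0))"
proof -
  let ?Bs = "{B. B \<subseteq> signed_vars n \<and> (card B = s \<or> (2 \<le> s \<and> card B = s - 2))}"
  have "feval n (K_terms n s) (K_sign s) (K_weight n) y =
      (\<Sum>F\<in>Pow {1..n}. \<Prod>i=1..n. if i \<in> F then 1 / y i else y i) *
      (\<Sum>B\<in>?Bs. of_int (K_sign s (F, B)) * (\<Prod>b\<in>B. signed_val (\<lambda>i. y i ^ 2) b))"
    unfolding feval_def K_terms_def sum.cartesian_product' sum_product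
    by (intro sum.cong refl) (auto simp: monomial_at_K_weight[OF y] K_sign_def)
  thus ?thesis by (simp only: sum_pow_eq_prod sum_K_sign)
qed

text \<open>Both sides equal \<open>minor_det n x s / y\<^sup>\<rho>\<close> for \<open>x = y\<^sup>2\<close>: the left one by the two determinant
  evaluations, the right one by the Leibniz formula.\<close>

lemma feval_K_conv_eq_numerator:
  assumes "s \<le> n" and y: "positive_on n y" and inc: "incr_gt1 n (\<lambda>i. y i ^ 2)"
  shows "feval n (K_terms n s \<times> Pow (posroots n)) (\<lambda>(x, S). (-1) ^ card S * K_sign s x)
          (\<lambda>(x, S) k. K_weight n x k - vsum S k) y
       = feval n (weylB n) wsgn (\<lambda>w k. wact w (rho_shift n (lamB n s)) k - rho2 n k) y"
proof -
  define x where "x = (\<lambda>i. y i ^ 2)"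
  define R where "R = monomial_at n (rho2 n) y"
  define D where "D = (\<Prod>a\<in>posroots n. 1 - monomial_at n (\<lambda>k. - a k) y)"
  define P where "P = (\<Prod>i=1..n. y i + 1 / y i)"
  have y_pos: "y i > 0" if "i \<in> {1..n}" for i using y that unfolding positive_on_def by auto
  have "R \<noteq> 0" unfolding R_def monomial_at_def using y_pos by (simp add: less_imp_neq[symmetric])
  have P_mult: "P * (\<Prod>i=1..n. y i - 1 / y i) = (\<Prod>i=1..n. x i - 1 / x i)"
    unfolding P_def prod.distrib[symmetric]
    by (intro prod.cong refl) (use y_pos in \<open>auto simp: x_def field_simps power2_eq_square\<close>)
  have "P * D = P * (R * D) / R" using \<open>R \<noteq> 0\<close> by simp
  also have "\<dots> = P * (\<Prod>i=1..n. y i - 1 / y i) * (\<Prod>i=1..n. \<Prod>j=Suc i..n. recip_sum x i - recip_sum x j) / R"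
    unfolding R_def D_def weyl_denominator_eval[OF y] x_def by (simp only: mult.assoc)
  also have "\<dots> = denom_det n x / R"
    unfolding P_mult denom_det_eq[OF inc[folded x_def]] ..
  finally have PD: "P * D = denom_det n x / R" .
  have "feval n (K_terms n s \<times> Pow (posroots n)) (\<lambda>(x, S). (-1) ^ card S * K_sign s x)
          (\<lambda>(x, S) k. K_weight n x k - vsum S k) y
      = (P * D) * (esym n x s - (if 2 \<le> s then esym n x (s - 2) else 0))"
    unfolding feval_denom_conv[OF finite_K_terms y] feval_K[OF y] x_def[symmetric] P_def D_def
    by (simp only: mult_ac)
  also have "\<dots> = minor_det n x s / R"
    unfolding PD minor_det_eq_esym[OF inc[folded x_def] \<open>s \<le> n\<close>] by simp
  finally show ?thesis unfolding feval_weyl_numerator[OF \<open>s \<le> n\<close> y] R_def x_def .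
qed

lemma incr_gt1_spec_point:
  assumes "T > 1" and "B \<ge> 2"
  shows "incr_gt1 n (\<lambda>i. spec_point B T i ^ 2)"
  unfolding incr_gt1_def spec_point_def
proof (intro conjI ballI allI impI)
  fix i assume "i \<in> {1..n}"
  thus "(T ^ B ^ i) ^ 2 > 1" using assms by (simp add: one_less_power)
next
  fix i j :: nat assume "1 \<le> i" "i < j" "j \<le> n"
  hence "B ^ i < B ^ j" using assms by (simp add: power_strict_increasing)
  hence "T ^ B ^ i < T ^ B ^ j" using assms by (simp add: power_strict_increasing)
  thus "(T ^ B ^ i) ^ 2 < (T ^ B ^ j) ^ 2" using assms by (simp add: power_strict_mono)
qed

lemma positive_on_spec_point: "T > 0 \<Longrightarrow> positive_on n (spec_point B T)"
  unfolding positive_on_def spec_point_def by simp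

lemma denom_conv_K_eq_wmult:
  assumes "s \<le> n"
  shows "denom_conv n (fcoeff (K_terms n s) (K_sign s) (K_weight n)) = denom_conv n (wmult n (lamB n s))"
proof -
  define X where "X = K_terms n s \<times> Pow (posroots n)"
  define c where "c = (\<lambda>(x, S :: (nat \<Rightarrow> int) set). (-1) ^ card S * K_sign s x)"
  define wt where "wt = (\<lambda>(x, S) k. K_weight n x k - vsum S k)"
  define wt' where "wt' = (\<lambda>w k. wact w (rho_shift n (lamB n s)) k - rho2 n k)"
  have "finite X" unfolding X_def by simp
  have "wt p k = 0" if "p \<in> X" "k \<notin> {1..n}" for p k
  proof -
    have "vsum (snd p) k = 0"
      using that posroots_outside unfolding vsum_def X_def by (intro sum.neutral) auto
    thus ?thesis unfolding wt_def K_weight_def using that by (simp add: case_prod_beta)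
  qed
  note boxX = bounded_weights_in_box[OF \<open>finite X\<close> this]
  have "wt' w k = 0" if "w \<in> weylB n" "k \<notin> {1..n}" for w k
    using that permutes_not_in[of "fst w" "{1..n}" k]
    unfolding wt'_def wact_def weylB_def by (auto simp: rho_shift_lamB_outside rho2_def)
  note boxW = bounded_weights_in_box[OF finite_weylB this]
  define C where "C = (\<Sum>x\<in>X. \<Sum>k=1..n. \<bar>wt x k\<bar>) + (\<Sum>w\<in>weylB n. \<Sum>k=1..n. \<bar>wt' w k\<bar>)"
  have "(\<Sum>x\<in>X. \<Sum>k=1..n. \<bar>wt x k\<bar>) \<ge> 0" "(\<Sum>w\<in>weylB n. \<Sum>k=1..n. \<bar>wt' w k\<bar>) \<ge> 0"
    by (auto intro!: sum_nonneg)
  hence "\<forall>x\<in>X. wt x \<in> box n C" "\<forall>w\<in>weylB n. wt' w \<in> box n C"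
    using boxX boxW box_mono unfolding C_def by (meson le_add_same_cancel1 le_add_same_cancel2)+
  moreover have "2 * C < int (nat (2 * C) + 2)" by linarith
  moreover have "feval n X c wt (spec_point (nat (2 * C) + 2) T) = feval n (weylB n) wsgn wt' (spec_point (nat (2 * C) + 2) T)"
    if "T > 1" for T
    unfolding X_def c_def wt_def wt'_def
    using feval_K_conv_eq_numerator[OF assms positive_on_spec_point incr_gt1_spec_point] that by simp
  ultimately have "fcoeff X c wt = fcoeff (weylB n) wsgn wt'"
    using fcoeff_unique[OF \<open>finite X\<close> finite_weylB] by blast
  thus ?thesis
    unfolding X_def c_def wt_def wt'_def denom_conv_wmult_fcoeff
    by (auto simp: denom_conv_fcoeff[OF finite_K_terms])
qed

lemma height_bound_wmult:
  assumes "wmult n lam mu \<noteq> 0"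
  shows "height n mu \<le> (\<Sum>w\<in>weylB n. \<bar>height n (wact w (rho_shift n lam))\<bar>) + \<bar>height n (rho2 n)\<bar>"
proof -
  obtain w where w: "w \<in> weylB n"
    and "kostant n (\<lambda>k. wact w (rho_shift n lam) k - (mu k + rho2 n k)) \<noteq> 0"
  proof (rule ccontr)
    assume "\<not> thesis"
    hence "wmult n lam mu = 0" using that unfolding wmult_def rho_shift_def by (intro sum.neutral) auto
    thus False using assms by simp
  qed
  hence "root_partitions (posroots n) (\<lambda>k. wact w (rho_shift n lam) k - (mu k + rho2 n k)) \<noteq> {}"
    unfolding kostant_eq_npartitions npartitions_def by force
  then obtain c where c: "lincomb (posroots n) c = (\<lambda>k. wact w (rho_shift n lam) k - (mu k + rho2 n k))"
    unfolding root_partitions_def by blast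
  have "0 \<le> (\<Sum>a\<in>posroots n. int (c a) * height n a)"
    using height_posroot_pos by (intro sum_nonneg) (simp add: less_imp_le)
  also have "\<dots> = height n (wact w (rho_shift n lam)) - height n mu - height n (rho2 n)"
    using arg_cong[OF c, of "height n"] unfolding lincomb_def by (simp add: height_sum height_diff height_add)
  finally have "height n mu \<le> \<bar>height n (wact w (rho_shift n lam))\<bar> + \<bar>height n (rho2 n)\<bar>" by linarith
  also have "\<bar>height n (wact w (rho_shift n lam))\<bar> \<le> (\<Sum>w\<in>weylB n. \<bar>height n (wact w (rho_shift n lam))\<bar>)"
    using w by (intro member_le_sum) auto
  finally show ?thesis by simp
qed

lemma height_bound_fcoeff:
  assumes "finite X" "fcoeff X c wt mu \<noteq> 0"
  shows "height n mu \<le> (\<Sum>x\<in>X. \<bar>height n (wt x)\<bar>)"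
proof -
  obtain x where "x \<in> X" "wt x = mu" using fcoeff_nonzero_imp_weight[OF assms(2)] .
  hence "height n mu \<le> \<bar>height n (wt x)\<bar>" by simp
  also have "\<dots> \<le> (\<Sum>x\<in>X. \<bar>height n (wt x)\<bar>)" using \<open>x \<in> X\<close> assms(1) by (intro member_le_sum) auto
  finally show ?thesis .
qed

theorem wmult_eq_K:
  assumes "s \<le> n"
  shows "wmult n (lamB n s) = fcoeff (K_terms n s) (K_sign s) (K_weight n)"
proof
  fix mu
  let ?W = "wmult n (lamB n s)" and ?K = "fcoeff (K_terms n s) (K_sign s) (K_weight n)"
  define CW where "CW = (\<Sum>w\<in>weylB n. \<bar>height n (wact w (rho_shift n (lamB n s)))\<bar>) + \<bar>height n (rho2 n)\<bar>"
  define CK where "CK = (\<Sum>x\<in>K_terms n s. \<bar>height n (K_weight n x)\<bar>)"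
  have "CW \<ge> 0" "CK \<ge> 0" unfolding CW_def CK_def by (auto intro!: sum_nonneg)
  have "denom_conv n (\<lambda>mu. ?W mu - ?K mu) mu = 0" for mu
    unfolding denom_conv_diff denom_conv_K_eq_wmult[OF assms] by simp
  moreover have "height n mu \<le> CW + CK" if "?W mu - ?K mu \<noteq> 0" for mu
  proof (cases "?W mu = 0")
    case True
    hence "height n mu \<le> CK"
      unfolding CK_def using that by (intro height_bound_fcoeff[OF finite_K_terms]) simp
    thus ?thesis using \<open>CW \<ge> 0\<close> by linarith
  next
    case False
    hence "height n mu \<le> CW" unfolding CW_def by (rule height_bound_wmult)
    thus ?thesis using \<open>CK \<ge> 0\<close> by linarith
  qed
  ultimately have "?W mu - ?K mu = 0" by (rule denom_conv_eq_0_imp_eq_0)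
  thus "?W mu = ?K mu" by simp
qed

section \<open>Principal specialization\<close>

lemma qint_0 [simp]: "qint 0 q = 0"
  unfolding qint_def by simp

lemma qint_Suc: "qint (Suc m) q = qint m q + q ^ m"
  unfolding qint_def by simp

lemma qint_add: "qint (a + b) q = qint a q + q ^ a * qint b q"
  by (induction b) (simp_all add: qint_Suc algebra_simps power_add)

lemma qint_pos: "q > 0 \<Longrightarrow> m \<ge> 1 \<Longrightarrow> qint m q > 0"
  unfolding qint_def by (intro sum_pos) (auto simp: lessThan_empty_iff)

lemma qfact_0 [simp]: "qfact 0 q = 1"
  unfolding qfact_def by simp

lemma qfact_Suc: "qfact (Suc j) q = qfact j q * qint (Suc j) q"
  unfolding qfact_def by (simp add: prod.cl_ivl_Suc)

lemma qfact_pos: "q > 0 \<Longrightarrow> qfact j q > 0"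
  unfolding qfact_def by (intro prod_pos) (auto intro: qint_pos)

fun qbinom_poly :: "nat \<Rightarrow> nat \<Rightarrow> real poly" where
  "qbinom_poly 0 j = (if j = 0 then 1 else 0)"
| "qbinom_poly (Suc N) j = (if j = 0 then 1 else qbinom_poly N j + monom 1 (Suc N - j) * qbinom_poly N (j - 1))"

lemma qbinom_poly_0 [simp]: "qbinom_poly N 0 = 1"
  by (cases N) auto

lemma qbinom_poly_eq_0: "j > N \<Longrightarrow> qbinom_poly N j = 0"
  by (induction N arbitrary: j) auto

lemma coeff_0_qbinom_poly: "j \<le> N \<Longrightarrow> coeff (qbinom_poly N j) 0 = 1"
proof (induction N arbitrary: j)
  case (Suc N j)
  consider "j = 0" | "j = Suc N" | "0 < j" "j \<le> N" using Suc.prems by linarith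
  thus ?case
    by cases (use Suc.IH[of N] Suc.IH[of j] in \<open>simp_all add: qbinom_poly_eq_0 coeff_monom_mult\<close>)
qed simp

lemma poly_qbinom_poly:
  assumes q: "q > 0" and "j \<le> N"
  shows "poly (qbinom_poly N j) q = qfact N q / (qfact j q * qfact (N - j) q)"
  using \<open>j \<le> N\<close>
proof (induction N arbitrary: j)
  case (Suc N j)
  have qf: "qfact m q > 0" for m using qfact_pos[OF q] .
  consider "j = 0" | "j = Suc N" | "0 < j" "j \<le> N" using Suc.prems by linarith
  thus ?case
  proof cases
    case 3
    then obtain j' where "j = Suc j'" by (cases j) auto
    with 3 have 3: "j = Suc j'" "j \<le> N" by simp_all
    have "poly (qbinom_poly (Suc N) j) q = poly (qbinom_poly N j) q + q ^ (Suc N - j) * poly (qbinom_poly N j') q"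
      using 3 by (simp add: poly_monom)
    also have "\<dots> = qfact N q / (qfact j q * qfact (N - j) q)
                 + q ^ (Suc N - j) * (qfact N q / (qfact j' q * qfact (N - j') q))"
      using Suc.IH[of j] Suc.IH[of j'] 3 by simp
    also have "\<dots> = qfact N q / (qfact j q * qfact (Suc N - j) q) *
                     (qint (Suc N - j) q + q ^ (Suc N - j) * qint j q)"
    proof -
      have "qfact (Suc N - j) q = qfact (N - j) q * qint (Suc N - j) q"
        unfolding Suc_diff_le[OF 3(2)] by (rule qfact_Suc)
      moreover have "N - j' = Suc N - j" "qfact j q = qfact j' q * qint j q"
        using 3 qfact_Suc by simp_all
      moreover have "qint (Suc N - j) q > 0" "qint j q > 0" using qint_pos[OF q] 3 by auto
      ultimately show ?thesis using qf[of j'] qf[of "N - j"] qf[of N] by (simp add: field_simps)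
    qed
    also have "qint (Suc N - j) q + q ^ (Suc N - j) * qint j q = qint (Suc N) q"
      using qint_add[of "Suc N - j" j q] 3 by (simp add: add.commute)
    finally show ?thesis by (simp add: qfact_Suc)
  qed (use Suc.IH[of N] qf[of N] qf[of "Suc N"] in \<open>simp_all add: qbinom_poly_eq_0\<close>)
qed simp

lemma triangle_Suc: "Suc j * j div 2 = j * (j - 1) div 2 + j"
proof -
  have "Suc j * j = j * (j - 1) + 2 * j" by (cases j) (simp_all add: algebra_simps)
  thus ?thesis by simp
qed

lemma coeff_prod_q_gauss:
  fixes a q :: real
  shows "coeff (\<Prod>k<N. [:1, a * q ^ k:]) j = a ^ j * q ^ (j * (j - 1) div 2) * poly (qbinom_poly N j) q"
proof (induction N arbitrary: j)
  case (Suc N j)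
  have "coeff (\<Prod>k<Suc N. [:1, a * q ^ k:]) j = coeff (\<Prod>k<N. [:1, a * q ^ k:]) j +
       (if j = 0 then 0 else a * q ^ N * coeff (\<Prod>k<N. [:1, a * q ^ k:]) (j - 1))"
    unfolding prod.lessThan_Suc by (rule coeff_mult_linear)
  also have "\<dots> = a ^ j * q ^ (j * (j - 1) div 2) * poly (qbinom_poly (Suc N) j) q"
  proof (cases j)
    case (Suc j')
    have rec: "poly (qbinom_poly (Suc N) j) q = poly (qbinom_poly N j) q + q ^ (N - j') * poly (qbinom_poly N j') q"
      using Suc by (simp add: poly_monom)
    show ?thesis
    proof (cases "j' \<le> N")
      case True
      have "N + j' * (j' - 1) div 2 = j * (j - 1) div 2 + (N - j')"
        using True triangle_Suc[of j'] Suc by simp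
      hence "q ^ N * q ^ (j' * (j' - 1) div 2) = q ^ (j * (j - 1) div 2) * q ^ (N - j')"
        by (simp add: power_add[symmetric])
      thus ?thesis unfolding rec using Suc.IH[of j] Suc.IH[of j'] Suc by (simp add: algebra_simps)
    next
      case False
      hence "qbinom_poly N j' = 0" "qbinom_poly N j = 0" using Suc by (auto intro: qbinom_poly_eq_0)
      thus ?thesis unfolding rec using Suc.IH[of j] Suc.IH[of j'] Suc by simp
    qed
  qed (use Suc.IH[of 0] in simp)
  finally show ?case .
qed (simp add: coeff_1)

lemma signed_factors_q_powers:
  fixes q :: real
  assumes "q > 0"
  shows "[:1, 1:] * (\<Prod>b\<in>signed_vars n. [:1, signed_val (\<lambda>i. q ^ i) b:]) = (\<Prod>k<2 * n + 1. [:1, (1 / q ^ n) * q ^ k:])"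
proof (induction n)
  case (Suc n)
  define g where "g k = [:1, (1 / q ^ Suc n) * q ^ k:]" for k
  have lhs: "(\<Prod>b\<in>signed_vars (Suc n). [:1, signed_val (\<lambda>i. q ^ i) b:])
      = (\<Prod>b\<in>signed_vars n. [:1, signed_val (\<lambda>i. q ^ i) b:]) * ([:1, 1 / q ^ Suc n:] * [:1, q ^ Suc n:])"
    unfolding signed_vars_def prod.cartesian_product' by (simp add: UNIV_bool signed_val_def mult.commute)
  have rhs: "(\<Prod>k<2 * Suc n + 1. g k) =
      [:1, 1 / q ^ Suc n:] * (\<Prod>k<2 * n + 1. [:1, (1 / q ^ n) * q ^ k:]) * [:1, q ^ Suc n:]"
  proof -
    have "2 * Suc n + 1 = Suc (Suc (2 * n + 1))" by simp
    moreover have "g 0 = [:1, 1 / q ^ Suc n:]" "g (Suc (2 * n + 1)) = [:1, q ^ Suc n:]"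
      unfolding g_def using assms by (simp_all add: power_add mult_2)
    moreover have "(\<lambda>k. g (Suc k)) = (\<lambda>k. [:1, (1 / q ^ n) * q ^ k:])"
      unfolding g_def using assms by simp
    ultimately show ?thesis
      using prod.lessThan_Suc_shift[of g "Suc (2 * n + 1)"] prod.lessThan_Suc[of "\<lambda>k. g (Suc k)" "2 * n + 1"]
      by (simp only: mult.assoc)
  qed
  show ?case unfolding g_def[symmetric] rhs lhs Suc.IH[symmetric] by (simp only: mult_ac)
qed (simp add: signed_vars_def)

text \<open>The coefficient of \<open>X\<^sup>j\<close> in \<open>\<Prod>\<^sub>k\<^sub><\<^sub>2\<^sub>n\<^sub>+\<^sub>1 (1 + q\<^bsup>k-n\<^esup> X)\<close>.\<close>

definition gauss_coeff :: "nat \<Rightarrow> real \<Rightarrow> nat \<Rightarrow> real" where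
  "gauss_coeff n q j = (1 / q ^ n) ^ j * q ^ (j * (j - 1) div 2) * poly (qbinom_poly (2 * n + 1) j) q"

lemma esym_q_powers:
  assumes "q > 0"
  shows "esym n (\<lambda>i. q ^ i) j + (if j = 0 then 0 else esym n (\<lambda>i. q ^ i) (j - 1)) = gauss_coeff n q j"
proof -
  have "esym n (\<lambda>i. q ^ i) j + (if j = 0 then 0 else esym n (\<lambda>i. q ^ i) (j - 1))
      = coeff ((\<Prod>b\<in>signed_vars n. [:1, signed_val (\<lambda>i. q ^ i) b:]) * [:1, 1:]) j"
    unfolding esym_def coeff_mult_linear by simp
  also have "\<dots> = coeff (\<Prod>k<2 * n + 1. [:1, (1 / q ^ n) * q ^ k:]) j"
    using signed_factors_q_powers[OF assms, of n] by (simp only: mult.commute)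
  also have "\<dots> = gauss_coeff n q j"
    unfolding gauss_coeff_def by (rule coeff_prod_q_gauss)
  finally show ?thesis .
qed

lemma esym_diff_q_powers:
  assumes "q > 0"
  shows "esym n (\<lambda>i. q ^ i) s - (if 2 \<le> s then esym n (\<lambda>i. q ^ i) (s - 2) else 0)
       = gauss_coeff n q s - (if 1 \<le> s then gauss_coeff n q (s - 1) else 0)"
proof -
  note E = esym_q_powers[OF assms, of n]
  consider "s = 0" | "s = 1" | "s \<ge> 2" by linarith
  thus ?thesis
  proof cases
    case 3
    hence "s - 1 - 1 = s - 2" "s - 1 \<noteq> 0" by auto
    thus ?thesis using E[of s] E[of "s - 1"] 3 by simp
  qed (use E[of 0] E[of 1] in simp_all)
qed

definition ps_exp :: "nat \<Rightarrow> (nat \<Rightarrow> int) \<Rightarrow> int" where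
  "ps_exp n v = (\<Sum>i=1..n. int i * v i)"

lemma psc_eq_K:
  assumes "s \<le> n"
  shows "psc n (lamB n s) e = (\<Sum>x | x \<in> K_terms n s \<and> ps_exp n (K_weight n x) = e. K_sign s x)"
proof -
  define M where "M = fcoeff (K_terms n s) (K_sign s) (K_weight n)"
  define A where "A = {x\<in>K_terms n s. ps_exp n (K_weight n x) = e}"
  have "finite A" unfolding A_def by simp
  have "psc n (lamB n s) e = (\<Sum>mu | mu \<in> wvec n \<and> M mu \<noteq> 0 \<and> ps_exp n mu = e. M mu)"
    unfolding psc_def wmult_eq_K[OF assms] M_def ps_exp_def ..
  also have "\<dots> = (\<Sum>mu\<in>K_weight n ` A. M mu)"
  proof (rule sum.mono_neutral_left)
    show "{mu. mu \<in> wvec n \<and> M mu \<noteq> 0 \<and> ps_exp n mu = e} \<subseteq> K_weight n ` A"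
      unfolding A_def M_def by (auto elim: fcoeff_nonzero_imp_weight)
    show "\<forall>mu\<in>K_weight n ` A - {mu. mu \<in> wvec n \<and> M mu \<noteq> 0 \<and> ps_exp n mu = e}. M mu = 0"
      unfolding A_def by (auto simp: wvec_def K_weight_def)
  qed (use \<open>finite A\<close> in simp)
  also have "\<dots> = (\<Sum>mu\<in>K_weight n ` A. \<Sum>x | x \<in> A \<and> K_weight n x = mu. K_sign s x)"
    unfolding M_def fcoeff_def A_def by (intro sum.cong refl) (auto intro!: sum.cong)
  also have "\<dots> = (\<Sum>x\<in>A. K_sign s x)" by (rule sum.image_gen[OF \<open>finite A\<close>, symmetric])
  finally show ?thesis unfolding A_def by simp
qed

lemma psc_support_subset:
  assumes "s \<le> n"
  shows "{e. psc n (lamB n s) e \<noteq> 0} \<subseteq> ps_exp n ` K_weight n ` K_terms n s"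
  using psc_eq_K[OF assms] by (fastforce intro: sum.neutral)

lemma laurent_psc_K:
  assumes "s \<le> n" and t: "t > 0"
  shows "(\<Sum>e\<in>ps_exp n ` K_weight n ` K_terms n s. of_int (psc n (lamB n s) e) * t powi e)
       = (\<Prod>i=1..n. t ^ i + 1 / t ^ i) *
         (gauss_coeff n (t ^ 2) s - (if 1 \<le> s then gauss_coeff n (t ^ 2) (s - 1) else 0))"
proof -
  have "(\<Sum>e\<in>ps_exp n ` K_weight n ` K_terms n s. of_int (psc n (lamB n s) e) * t powi e)
      = (\<Sum>e\<in>(\<lambda>x. ps_exp n (K_weight n x)) ` K_terms n s.
           \<Sum>x | x \<in> K_terms n s \<and> ps_exp n (K_weight n x) = e. of_int (K_sign s x) * t powi ps_exp n (K_weight n x))"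
    unfolding psc_eq_K[OF assms(1)] by (simp add: image_image sum_distrib_right)
  also have "\<dots> = feval n (K_terms n s) (K_sign s) (K_weight n) (\<lambda>i. t ^ i)"
    unfolding feval_def ps_exp_def monomial_at_powers[OF t] by (rule sum.image_gen[symmetric]) simp
  also have "\<dots> = (\<Prod>i=1..n. t ^ i + 1 / t ^ i) *
      (esym n (\<lambda>i. (t ^ i) ^ 2) s - (if 2 \<le> s then esym n (\<lambda>i. (t ^ i) ^ 2) (s - 2) else 0))"
    by (rule feval_K) (use t in \<open>simp add: positive_on_def\<close>)
  also have "(\<lambda>i. (t ^ i) ^ 2) = (\<lambda>i. (t ^ 2) ^ i)" by (simp add: power_mult[symmetric] mult.commute)
  finally show ?thesis using esym_diff_q_powers[of "t ^ 2" n s] t by simp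
qed

text \<open>Unfolding the recursion at \<open>2n + 1 = Suc (2n)\<close> would only obscure the goals below.\<close>

declare qbinom_poly.simps(2) [simp del]

definition ps_poly :: "nat \<Rightarrow> nat \<Rightarrow> real poly" where
  "ps_poly n s = (\<Prod>i=1..n. monom 1 i + 1) *
     (qbinom_poly (2 * n + 1) s - (if 1 \<le> s then monom 1 (n + 1 - s) * qbinom_poly (2 * n + 1) (s - 1) else 0))"

text \<open>Twice the lowest exponent \<open>\<eta>\<close> of \<open>ps(\<omega>\<^sub>n + \<omega>\<^sub>s)\<close>.\<close>

definition eta_val :: "nat \<Rightarrow> nat \<Rightarrow> int" where
  "eta_val n s = - (\<Sum>i=1..n. int i) - 2 * int (s * n) + 2 * int (s * (s - 1) div 2)"

lemma power2_power_eq_powi: "(t::real) \<noteq> 0 \<Longrightarrow> (t ^ 2) ^ k = t powi (2 * int k)"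
  by (simp add: power_int_mult power_mult[symmetric])

lemma prod_power_plus_inverse:
  fixes t :: real
  assumes "t \<noteq> 0"
  shows "(\<Prod>i=1..n. t ^ i + 1 / t ^ i) = t powi (- (\<Sum>i=1..n. int i)) * (\<Prod>i=1..n. (t ^ 2) ^ i + 1)"
proof -
  have "t ^ i + 1 / t ^ i = t powi (- int i) * ((t ^ 2) ^ i + 1)" for i
    using assms by (simp add: power_int_minus power_mult[symmetric] field_simps power_mult_distrib power2_eq_square)
  hence "(\<Prod>i=1..n. t ^ i + 1 / t ^ i) = (\<Prod>i=1..n. t powi (- int i)) * (\<Prod>i=1..n. (t ^ 2) ^ i + 1)"
    by (simp add: prod.distrib)
  also have "(\<Prod>i=1..n. t powi (- int i)) = t powi (- (\<Sum>i=1..n. int i))"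
    using prod_powi[OF assms, of "\<lambda>i. - int i" "{1..n}"] by (simp add: sum_negf)
  finally show ?thesis .
qed

lemma gauss_coeff_square:
  fixes t :: real
  assumes "t \<noteq> 0"
  shows "gauss_coeff n (t ^ 2) j =
    t powi (2 * int (j * (j - 1) div 2) - 2 * int (n * j)) * poly (qbinom_poly (2 * n + 1) j) (t ^ 2)"
proof -
  have "(1 / (t ^ 2) ^ n) ^ j = 1 / t ^ (2 * (n * j))"
    by (simp add: power_one_over power_mult[symmetric] mult.assoc)
  also have "\<dots> = t powi (- int (2 * (n * j)))"
    by (simp only: power_int_minus power_int_of_nat divide_inverse mult_1)
  finally have "(1 / (t ^ 2) ^ n) ^ j = t powi (- (2 * int (n * j)))" by simp
  thus ?thesis
    unfolding gauss_coeff_def power2_power_eq_powi[OF assms] using assms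
    by (simp add: power_int_add[symmetric] algebra_simps)
qed

lemma gauss_coeff_diff_square:
  fixes t :: real
  assumes "s \<le> n" "t \<noteq> 0"
  shows "gauss_coeff n (t ^ 2) s - (if 1 \<le> s then gauss_coeff n (t ^ 2) (s - 1) else 0) =
    t powi (2 * int (s * (s - 1) div 2) - 2 * int (n * s)) *
    (poly (qbinom_poly (2 * n + 1) s) (t ^ 2) -
     (if 1 \<le> s then (t ^ 2) ^ (n + 1 - s) * poly (qbinom_poly (2 * n + 1) (s - 1)) (t ^ 2) else 0))"
proof (cases "1 \<le> s")
  case True
  define E where "E = 2 * int (s * (s - 1) div 2) - 2 * int (n * s)"
  have "2 * int ((s - 1) * (s - 1 - 1) div 2) - 2 * int (n * (s - 1)) = E + 2 * int (n + 1 - s)"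
    unfolding E_def using triangle_Suc[of "s - 1"] True assms(1) by (simp add: of_nat_diff algebra_simps)
  hence "gauss_coeff n (t ^ 2) (s - 1) = t powi (E + 2 * int (n + 1 - s)) * poly (qbinom_poly (2 * n + 1) (s - 1)) (t ^ 2)"
    by (simp only: gauss_coeff_square[OF assms(2)])
  also have "\<dots> = t powi E * ((t ^ 2) ^ (n + 1 - s) * poly (qbinom_poly (2 * n + 1) (s - 1)) (t ^ 2))"
    unfolding power2_power_eq_powi[OF assms(2)] using assms(2) by (simp add: power_int_add)
  finally have "gauss_coeff n (t ^ 2) (s - 1) = \<dots>" .
  moreover have "gauss_coeff n (t ^ 2) s = t powi E * poly (qbinom_poly (2 * n + 1) s) (t ^ 2)"
    unfolding E_def by (rule gauss_coeff_square[OF assms(2)])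
  ultimately show ?thesis using True unfolding E_def[symmetric] by (simp add: right_diff_distrib)
qed (simp add: gauss_coeff_square[OF assms(2)])

lemma ps_closed_form:
  fixes t :: real
  assumes "s \<le> n" "t > 0"
  shows "(\<Prod>i=1..n. t ^ i + 1 / t ^ i) * (gauss_coeff n (t ^ 2) s - (if 1 \<le> s then gauss_coeff n (t ^ 2) (s - 1) else 0))
       = t powi eta_val n s * poly (ps_poly n s) (t ^ 2)"
proof -
  have "t \<noteq> 0" using assms(2) by simp
  have "eta_val n s = - (\<Sum>i=1..n. int i) + (2 * int (s * (s - 1) div 2) - 2 * int (n * s))"
    unfolding eta_val_def by (simp add: mult.commute)
  hence "t powi eta_val n s = t powi (- (\<Sum>i=1..n. int i)) * t powi (2 * int (s * (s - 1) div 2) - 2 * int (n * s))"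
    by (simp only: power_int_add \<open>t \<noteq> 0\<close> simp_thms)
  thus ?thesis
    unfolding prod_power_plus_inverse[OF \<open>t \<noteq> 0\<close>] gauss_coeff_diff_square[OF assms(1) \<open>t \<noteq> 0\<close>] ps_poly_def
    by (simp add: poly_prod poly_monom)
qed

lemma coeff_0_ps_poly:
  assumes "s \<le> n"
  shows "coeff (ps_poly n s) 0 = 1"
proof -
  have "poly (qbinom_poly (2 * n + 1) s) 0 = 1"
    using coeff_0_qbinom_poly[of s "2 * n + 1"] assms by (simp add: poly_0_coeff_0)
  moreover have "(\<Prod>i=1..n. (0::real) ^ i + 1) = 1" by (intro prod.neutral) auto
  ultimately have "poly (ps_poly n s) 0 = 1"
    unfolding ps_poly_def using assms by (simp add: poly_prod poly_monom)
  thus ?thesis by (simp add: poly_0_coeff_0)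
qed

lemma laurent_psc_ps_poly:
  assumes "s \<le> n" and t: "t > 0"
  shows "(\<Sum>e\<in>ps_exp n ` K_weight n ` K_terms n s. of_int (psc n (lamB n s) e) * t powi e)
       = (\<Sum>e\<in>(\<lambda>k. eta_val n s + 2 * int k) ` {..degree (ps_poly n s)}.
            coeff (ps_poly n s) (nat ((e - eta_val n s) div 2)) * t powi e)"
proof -
  have "(\<Sum>e\<in>ps_exp n ` K_weight n ` K_terms n s. of_int (psc n (lamB n s) e) * t powi e)
      = t powi eta_val n s * poly (ps_poly n s) (t ^ 2)"
    unfolding laurent_psc_K[OF assms] ps_closed_form[OF assms] ..
  also have "\<dots> = (\<Sum>k\<le>degree (ps_poly n s). coeff (ps_poly n s) k * t powi (eta_val n s + 2 * int k))"
    unfolding poly_altdef sum_distrib_left power2_power_eq_powi[OF less_imp_neq[OF t, symmetric]] using t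
    by (intro sum.cong refl) (simp add: power_int_add)
  also have "\<dots> = (\<Sum>e\<in>(\<lambda>k. eta_val n s + 2 * int k) ` {..degree (ps_poly n s)}.
            coeff (ps_poly n s) (nat ((e - eta_val n s) div 2)) * t powi e)"
    by (subst sum.reindex) (auto simp: inj_on_def)
  finally show ?thesis .
qed

lemma psc_eq_coeff_ps_poly:
  assumes "s \<le> n"
  shows "(if e \<in> ps_exp n ` K_weight n ` K_terms n s then of_int (psc n (lamB n s) e) else 0) =
         (if e \<in> (\<lambda>k. eta_val n s + 2 * int k) ` {..degree (ps_poly n s)}
          then coeff (ps_poly n s) (nat ((e - eta_val n s) div 2)) else (0::real))"
  by (rule laurent_coeffs_unique) (use laurent_psc_ps_poly[OF assms] in auto)

lemma eta2_eq_eta_val: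
  assumes "s \<le> n"
  shows "eta2 n (lamB n s) = eta_val n s"
proof -
  let ?S = "{e. psc n (lamB n s) e \<noteq> 0}"
  have fin: "finite ?S" using psc_support_subset[OF assms] by (rule finite_subset) simp
  have "eta_val n s \<in> (\<lambda>k. eta_val n s + 2 * int k) ` {..degree (ps_poly n s)}" by force
  hence "(if eta_val n s \<in> ps_exp n ` K_weight n ` K_terms n s then of_int (psc n (lamB n s) (eta_val n s)) else 0) = (1::real)"
    using psc_eq_coeff_ps_poly[OF assms, of "eta_val n s"] coeff_0_ps_poly[OF assms] by simp
  hence mem: "eta_val n s \<in> ?S" by (auto split: if_splits)
  have "eta_val n s \<le> e" if "e \<in> ?S" for e
  proof -
    have "e \<in> ps_exp n ` K_weight n ` K_terms n s" using that psc_support_subset[OF assms] by auto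
    hence "e \<in> (\<lambda>k. eta_val n s + 2 * int k) ` {..degree (ps_poly n s)}"
      using psc_eq_coeff_ps_poly[OF assms, of e] that by (auto split: if_splits)
    thus ?thesis by auto
  qed
  thus ?thesis unfolding eta2_def by (intro Min_eqI[OF fin _ mem]) auto
qed

lemma tps_eq_poly_ps_poly:
  assumes "s \<le> n" and q: "q > 0"
  shows "tps n (lamB n s) q = poly (ps_poly n s) q"
proof -
  define t where "t = sqrt q"
  have t: "t > 0" "t ^ 2 = q" unfolding t_def using q by simp_all
  let ?S = "{e. psc n (lamB n s) e \<noteq> 0}"
  have powr_half: "q powr (of_int k / 2) = t powi k" for k :: int
  proof -
    have "q powr (of_int k / 2) = (q powr (1/2)) powr of_int k" by (simp add: powr_powr)
    also have "q powr (1/2) = t" unfolding t_def using q by (simp add: powr_half_sqrt)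
    finally show ?thesis using t by (simp add: powr_real_of_int')
  qed
  have "tps n (lamB n s) q = (\<Sum>e\<in>?S. of_int (psc n (lamB n s) e) * t powi (e - eta_val n s))"
    unfolding tps_def eta2_eq_eta_val[OF assms(1)] powr_half ..
  also have "\<dots> = t powi (- eta_val n s) * (\<Sum>e\<in>?S. of_int (psc n (lamB n s) e) * t powi e)"
    unfolding sum_distrib_left
    by (intro sum.cong refl) (use t in \<open>simp add: power_int_diff power_int_minus divide_inverse\<close>)
  also have "(\<Sum>e\<in>?S. of_int (psc n (lamB n s) e) * t powi e) =
      (\<Sum>e\<in>ps_exp n ` K_weight n ` K_terms n s. of_int (psc n (lamB n s) e) * t powi e)"
    by (rule sum.mono_neutral_left) (use psc_support_subset[OF assms(1)] in auto)
  also have "\<dots> = t powi eta_val n s * poly (ps_poly n s) (t ^ 2)"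
    unfolding laurent_psc_K[OF assms(1) t(1)] ps_closed_form[OF assms(1) t(1)] ..
  finally show ?thesis using t by (simp add: power_int_minus)
qed

lemma qbinom_diff_eq:
  assumes q: "q > 0" and "s \<le> n"
  defines "m \<equiv> n + 1 - s"
  shows "poly (qbinom_poly (2 * n + 1) s) q - (if 1 \<le> s then q ^ m * poly (qbinom_poly (2 * n + 1) (s - 1)) q else 0)
     = qfact (2 * n + 1) q * qint m q * (1 + q ^ (n + 1)) / (qfact s q * qfact (m + (n + 1)) q)"
proof -
  define F where "F = qfact (2 * n + 1) q"
  have qf: "qfact j q > 0" for j using qfact_pos[OF q] .
  have qi: "j \<ge> 1 \<Longrightarrow> qint j q > 0" for j using qint_pos[OF q] .
  have fact_mn: "qfact (m + (n + 1)) q = qfact (m + n) q * qint (m + (n + 1)) q"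
    using qfact_Suc[of "m + n" q] by simp
  have int_mn: "qint (m + (n + 1)) q = qint m q + q ^ m * qint (n + 1) q"
    by (rule qint_add)
  show ?thesis
  proof (cases "s = 0")
    case True
    hence "m = n + 1" unfolding m_def by simp
    have "qfact (m + (n + 1)) q = F * qint (m + (n + 1)) q"
      unfolding F_def \<open>m = n + 1\<close> using qfact_Suc[of "2 * n + 1" q] by (simp add: mult_2)
    also have "qint (m + (n + 1)) q = qint m q * (1 + q ^ (n + 1))"
      unfolding int_mn by (simp add: \<open>m = n + 1\<close> algebra_simps)
    finally have "qfact (m + (n + 1)) q = F * (qint m q * (1 + q ^ (n + 1)))" .
    moreover have "qint m q > 0" "1 + q ^ (n + 1) > 0" using qi[of m] q \<open>m = n + 1\<close> by (simp_all add: add_pos_pos)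
    ultimately show ?thesis using True qf[of "2 * n + 1"] unfolding F_def[symmetric] by simp
  next
    case False
    have a: "2 * n + 1 - s = m + n" "2 * n + 1 - (s - 1) = m + (n + 1)" unfolding m_def using assms(2) False by simp_all
    have fs: "qfact s q = qfact (s - 1) q * qint s q" using qfact_Suc[of "s - 1" q] False by simp
    have "q ^ m * q ^ s = q ^ (n + 1)" unfolding m_def using assms(2) by (simp add: power_add[symmetric])
    hence diff: "qint (m + (n + 1)) q - q ^ m * qint s q = qint m q * (1 + q ^ (n + 1))"
      unfolding int_mn using qint_add[of s m q] assms(2) unfolding m_def by (simp add: algebra_simps)
    have "poly (qbinom_poly (2 * n + 1) s) q - q ^ m * poly (qbinom_poly (2 * n + 1) (s - 1)) q
       = F / (qfact s q * qfact (m + n) q) - q ^ m * (F / (qfact (s - 1) q * qfact (m + (n + 1)) q))"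
      using poly_qbinom_poly[OF q, of s "2 * n + 1"] poly_qbinom_poly[OF q, of "s - 1" "2 * n + 1"] assms(2)
      unfolding a F_def by simp
    also have "\<dots> = F * (qint (m + (n + 1)) q - q ^ m * qint s q) / (qfact s q * qfact (m + (n + 1)) q)"
      unfolding fact_mn fs using qf[of "s - 1"] qf[of "m + n"] qi[of s] qi[of "m + (n + 1)"] False
      by (simp add: field_simps)
    finally show ?thesis using False unfolding diff F_def by (simp add: mult.assoc)
  qed
qed

lemma poly_ps_poly_eq_qcat:
  assumes q: "q > 0" and "s \<le> n"
  shows "poly (ps_poly n s) q = qcat (2 * n + 1 - s) s q / (q ^ (n + 1 - s) + 1) * (\<Prod>k=1..n+1. (q ^ k + 1))"
proof -
  define m where "m = n + 1 - s"
  define F where "F = qfact (2 * n + 1) q"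
  define D where "D = qfact s q * qfact (m + (n + 1)) q"
  define P where "P = (\<Prod>i=1..n. q ^ i + 1)"
  have "D \<noteq> 0" unfolding D_def using qfact_pos[OF q] by (simp add: less_imp_neq[symmetric])
  have "1 + q ^ m \<noteq> 0" using q by (simp add: add_pos_pos less_imp_neq[symmetric])
  have "2 * n + 1 - s + s = 2 * n + 1" "2 * n + 1 - s - s + 1 = m + m" "2 * n + 1 - s + 1 = m + (n + 1)"
    using assms(2) unfolding m_def by auto
  hence qcat_eq: "qcat (2 * n + 1 - s) s q = F * (qint m q * (1 + q ^ m)) / D"
    unfolding qcat_def F_def D_def by (simp only: qint_add) (simp add: algebra_simps)
  have "poly (ps_poly n s) q = P * (poly (qbinom_poly (2 * n + 1) s) q -
      (if 1 \<le> s then q ^ m * poly (qbinom_poly (2 * n + 1) (s - 1)) q else 0))"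
    unfolding ps_poly_def m_def P_def by (simp add: poly_prod poly_monom)
  also have "\<dots> = P * (F * qint m q * (1 + q ^ (n + 1)) / D)"
    unfolding qbinom_diff_eq[OF assms, folded m_def] F_def D_def ..
  also have "\<dots> = F * (qint m q * (1 + q ^ m)) / D / (1 + q ^ m) * (P * (1 + q ^ (n + 1)))"
  proof -
    have "P' * (F' * x * B / D') = F' * (x * A) / D' / A * (P' * B)" if "A \<noteq> 0" "D' \<noteq> 0" for P' F' x B D' A :: real
      using that by (simp add: field_simps)
    thus ?thesis using \<open>D \<noteq> 0\<close> \<open>1 + q ^ m \<noteq> 0\<close> by blast
  qed
  also have "P * (1 + q ^ (n + 1)) = (\<Prod>k=1..n+1. (q ^ k + 1))"
    unfolding P_def by (simp add: prod.cl_ivl_Suc add.commute)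
  finally show ?thesis unfolding qcat_eq m_def[symmetric] by (simp add: add.commute)
qed

theorem proposition5p17:
  fixes n s :: nat and q :: real
  assumes "n \<ge> 1" and "s \<le> n" and "q > 0"
  shows "tps n (\<lambda>j. omega2 n n j + omegat2 n s j) q =
         qcat (2 * n + 1 - s) s q / (q ^ (n + 1 - s) + 1) * (\<Prod>k=1..n+1. (q ^ k + 1))"
proof -
  show ?thesis using tps_eq_poly_ps_poly[OF assms(2,3)] poly_ps_poly_eq_qcat[OF assms(3,2)] by simp
qed

end
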